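(* Assume the initial state $x_0\in\mathbb{R}^n$ is known and the disturbances satisfy $w_k\in\mathbb{W}:=\{w\in\mathbb{R}^p\mid w^\top Pw\le1\}$ for all $k=0,\dots,T-1$, with $P\in\mathbb{R}^{p\times p}$ symmetric, $P\succ0$; write $\mathbb{W}^T=\mathbb{W}\times\dots\times\mathbb{W}$ ($T$ times). Let $\bar\mu^*_{\mathrm{PWB}}$ be the optimal value of $$\min_{\bar\mu\in\mathbb{R},\,\Phi}\ \bar\mu\quad\text{s.t.}\quad \bm{\delta}^\top(\Phi^\top\mathcal{C}\Phi-\mathcal{O}-\bar\mu\mathcal{W}_w)\bm{\delta}\le0\ \ \forall\mathbf{w}\in\mathbb{W}^T,\qquad \begin{bmatrix}\mathcal{I}-\mathcal{Z}\mathcal{A} & -\mathcal{Z}\mathcal{B}\end{bmatrix}\Phi=\mathcal{E},$$ with $\bm{\delta}=[x_0^\top\ \mathbf{w}^\top]^\top$. Let $\bar\mu^*$ be the optimal value of the semidefinite program $$\min_{\bar\mu,\bar\lambda_1,\dots,\bar\lambda_T,\,\bar\Phi}\ \bar\mu\quad\text{s.t.}\quad \bar\lambda_i\ge0\ (i=1,\dots,T),\quad \begin{bmatrix}\mathcal{I}-\mathcal{Z}\mathcal{A} & -\mathcal{Z}\mathcal{B}\end{bmatrix}\bar\Phi=\mathcal{E},$$ $$\begin{bmatrix} x_0^\top(\mathcal{O}_1+\bar\mu\mathcal{W}_1)x_0-\sum_{i=1}^T\bar\lambda_i & x_0^\top(\mathcal{O}_2^\top+\bar\mu\mathcal{W}_2^\top)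 & x_0^\top\bar\Phi_0^\top\mathcal{C}^{1/2}\\ (\mathcal{O}_2+\bar\mu\mathcal{W}_2)x_0 & \sum_{i=1}^T\bar\lambda_i\mathcal{P}_i+\mathcal{O}_3+\bar\mu\mathcal{W}_3 & \bar\Phi_w^\top\mathcal{C}^{1/2}\\ \mathcal{C}^{1/2}\bar\Phi_0x_0 & \mathcal{C}^{1/2}\bar\Phi_w & \mathcal{I}\end{bmatrix}\succeq0,$$ with corresponding controller $\bar{\mathcal{K}}^*=\bar\Phi_u^*(\bar\Phi_x^* )^{-1}$ for a minimiser $\bar\Phi^*$. Let $\mu^*$ be the optimal value of the semidefinite program $$\min_{\mu,\lambda,\Phi}\ \mu\quad\text{s.t.}\quad\lambda\ge0,\quad \begin{bmatrix}\mathcal{I}-\mathcal{Z}\mathcal{A} & -\mathcal{Z}\mathcal{B}\end{bmatrix}\Phi=\mathcal{E},\quad \begin{bmatrix} x_0^\top(\mathcal{O}_1+\mu\mathcal{W}_1)x_0-\lambda\omega & x_0^\top(\mathcal{O}_2^\top+\mu\mathcal{W}_2^\top) & x_0^\top\Phi_0^\top\mathcal{C}^{1/2}\\ (\mathcal{O}_2+\mu\mathcal{W}_2)x_0 & \lambda\mathcal{I}+\mathcal{O}_3+\mu\mathcal{W}_3 & \Phi_w^\top\mathcal{C}^{1/2}\\ \mathcal{C}^{1/2}\Phi_0x_0 & \mathcal{C}^{1/2}\Phi_w & \mathcal{I}\end{bmatrix}\succeq0$$ with $\omega=T/\sigma_{\min}(P)$. Then $\bar\mu^*$ is a (possibly suboptimal)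 generalised dynamic regret performance level for pointwise bounded disturbances, and $$\bar\mu^*_{\mathrm{PWB}}\le\bar\mu^*\le\mu^*.$$
   Context: Let $n,m,p,T$ be positive integers. Consider the discrete-time linear time-varying system $x_{k+1}=A_kx_k+B_ku_k+E_kw_k$, $k=0,\dots,T-1$, with known $A_k\in\mathbb{R}^{n\times n}$, $B_k\in\mathbb{R}^{n\times m}$, $E_k\in\mathbb{R}^{n\times p}$, each $E_k$ of full row rank. Write $\mathbf{x}=[x_0^\top\cdots x_T^\top]^\top\in\mathbb{R}^{n(T+1)}$, $\mathbf{u}=[u_0^\top\cdots u_T^\top]^\top\in\mathbb{R}^{m(T+1)}$, $\mathbf{w}=[w_0^\top\cdots w_{T-1}^\top]^\top\in\mathbb{R}^{pT}$, $\bm{\delta}=[x_0^\top\ \mathbf{w}^\top]^\top\in\mathbb{R}^{n+pT}$. Cost matrices: symmetric $Q_k\succeq0$ ($n\times n$), $R_k\succ0$ ($m\times m$), $k=0,\dots,T$; $\mathcal{Q}=\mathrm{blkdiag}(Q_0,\dots,Q_T)$, $\mathcal{R}=\mathrm{blkdiag}(R_0,\dots,R_T)$, $\mathcal{C}=\mathrm{blkdiag}(\mathcal{Q},\mathcal{R})$, and $\mathcal{C}^{1/2}$ its symmetric positive semidefinite square root. Let $F\in\mathbb{R}^{n(T+1)\times m(T+1)}$, $G\in\mathbb{R}^{n(T+1)\times(n+pT)}$ be the matrices such that every trajectory satisfies $\mathbf{x}=F\mathbf{u}+G\bm{\delta}$. Define $\mathcal{O}=G^\top\mathcal{Q}(\mathcal{I}+F\mathcal{R}^{-1}F^\top\mathcal{Q})^{-1}G$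 (the optimal non-causal cost is $\bm{\delta}^\top\mathcal{O}\bm{\delta}$), partitioned as $\mathcal{O}=\begin{bmatrix}\mathcal{O}_1&\mathcal{O}_2^\top\\ \mathcal{O}_2&\mathcal{O}_3\end{bmatrix}$ with $\mathcal{O}_1\in\mathbb{R}^{n\times n}$, $\mathcal{O}_3\in\mathbb{R}^{pT\times pT}$. A symmetric disturbance weight $\mathcal{W}_w\succ0$ of size $n+pT$ is given, partitioned as $\mathcal{W}_w=\begin{bmatrix}\mathcal{W}_1&\mathcal{W}_2^\top\\ \mathcal{W}_2&\mathcal{W}_3\end{bmatrix}$ conformally. Let $\mathcal{A}=\mathrm{blkdiag}(A_0,\dots,A_T)$, $\mathcal{B}=\mathrm{blkdiag}(B_0,\dots,B_T)$ (with $A_T,B_T$ arbitrary; they do not affect the constraint), $\mathcal{E}=\mathrm{blkdiag}(\mathcal{I}_n,E_0,\dots,E_{T-1})$, and $\mathcal{Z}$ the block downshift operator on $\mathbb{R}^{n(T+1)}$ with blocks of size $n$. A system response $\Phi\in\mathbb{R}^{(n+m)(T+1)\times(n+pT)}$ is split by rows as $\Phi=\begin{bmatrix}\Phi_x\\ \Phi_u\end{bmatrix}$ ($\Phi_x$ the first $n(T+1)$ rows) and by columns as $\Phi=[\Phi_0\ \Phi_w]$ ($\Phi_0$ the first $n$ columns); it represents $[\mathbf{x}^\top\ \mathbf{u}^\top]^\top=\Phi\bm{\delta}$ under the feedback $\mathbf{u}=\Phi_u\Phi_x^{-1}\mathbf{x}$. For $i=1,\dots,T$, $\mathcal{P}_i\in\mathbb{R}^{pT\times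 pT}$ is the block-diagonal matrix with $P$ as its $i$-th diagonal $p\times p$ block and zeros elsewhere. $\sigma_{\min}(P)$ is the smallest singular value of $P$. *)

theory Defs
  imports "Jordan_Normal_Form.Char_Poly" "Jordan_Normal_Form.DL_Rank" "HOL-Library.Extended_Real"
begin

definition subm :: "real mat \<Rightarrow> nat \<Rightarrow> nat \<Rightarrow> nat \<Rightarrow> nat \<Rightarrow> real mat" where
  "subm M r0 c0 r c = mat r c (\<lambda>(i,j). M $$ (r0 + i, c0 + j))"

definition bdiag :: "nat \<Rightarrow> nat \<Rightarrow> nat \<Rightarrow> (nat \<Rightarrow> real mat) \<Rightarrow> real mat" where
  "bdiag N r c f = mat (N * r) (N * c)
     (\<lambda>(i,j). if i div r = j div c then f (i div r) $$ (i mod r, j mod c) else 0)"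

definition hcat :: "real mat \<Rightarrow> real mat \<Rightarrow> real mat" where
  "hcat M N = four_block_mat M N (0\<^sub>m 0 (dim_col M)) (0\<^sub>m 0 (dim_col N))"

definition blk3 :: "real mat \<Rightarrow> real mat \<Rightarrow> real mat \<Rightarrow> real mat \<Rightarrow> real mat \<Rightarrow> real mat
   \<Rightarrow> real mat \<Rightarrow> real mat \<Rightarrow> real mat \<Rightarrow> real mat" where
  "blk3 a b c d e f g h i = four_block_mat (four_block_mat a b d e) (c @\<^sub>r f) (hcat g h) i"

definition colm :: "real vec \<Rightarrow> real mat" where
  "colm v = mat_of_cols (dim_vec v) [v]"

definition scm :: "real \<Rightarrow> real mat" where
  "scm s = mat 1 1 (\<lambda>_. s)"

fun msum :: "nat \<Rightarrow> (nat \<Rightarrow> real mat) \<Rightarrow> nat \<Rightarrow> real mat" where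
  "msum d f 0 = 0\<^sub>m d d"
| "msum d f (Suc k) = msum d f k + f (Suc k)"

definition quad :: "real mat \<Rightarrow> real vec \<Rightarrow> real" where
  "quad M v = v \<bullet> (M *\<^sub>v v)"

definition psd :: "real mat \<Rightarrow> bool" where
  "psd M \<longleftrightarrow> M \<in> carrier_mat (dim_row M) (dim_row M) \<and> transpose_mat M = M \<and>
     (\<forall>v \<in> carrier_vec (dim_row M). quad M v \<ge> 0)"

definition pd :: "real mat \<Rightarrow> bool" where
  "pd M \<longleftrightarrow> M \<in> carrier_mat (dim_row M) (dim_row M) \<and> transpose_mat M = M \<and>
     (\<forall>v \<in> carrier_vec (dim_row M). v \<noteq> 0\<^sub>v (dim_row M) \<longrightarrow> quad M v > 0)"

definition minv :: "real mat \<Rightarrow> real mat" where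
  "minv M = (THE N. N \<in> carrier_mat (dim_row M) (dim_row M) \<and>
                    M * N = 1\<^sub>m (dim_row M) \<and> N * M = 1\<^sub>m (dim_row M))"

definition sigma_min :: "real mat \<Rightarrow> real" where
  "sigma_min P = sqrt (Min {ev. eigenvalue (transpose_mat P * P) ev})"

text \<open>Trajectories of x_{k+1} = A_k x_k + B_k u_k + E_k w_k, stacked;
  dl = [x_0; w] with w = [w_0; ...; w_{T-1}].\<close>
definition is_traj :: "nat \<Rightarrow> nat \<Rightarrow> nat \<Rightarrow> nat \<Rightarrow> (nat \<Rightarrow> real mat) \<Rightarrow> (nat \<Rightarrow> real mat)
   \<Rightarrow> (nat \<Rightarrow> real mat) \<Rightarrow> real vec \<Rightarrow> real vec \<Rightarrow> real vec \<Rightarrow> bool" where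
  "is_traj n m p T A B E x u dl \<longleftrightarrow>
     x \<in> carrier_vec (n * (T+1)) \<and> u \<in> carrier_vec (m * (T+1)) \<and> dl \<in> carrier_vec (n + p * T) \<and>
     vec n (\<lambda>i. x $ i) = vec n (\<lambda>i. dl $ i) \<and>
     (\<forall>k<T. vec n (\<lambda>i. x $ ((k+1) * n + i)) =
        A k *\<^sub>v vec n (\<lambda>i. x $ (k * n + i)) + B k *\<^sub>v vec m (\<lambda>i. u $ (k * m + i))
        + E k *\<^sub>v vec p (\<lambda>i. dl $ (n + k * p + i)))"

definition Acal :: "nat \<Rightarrow> nat \<Rightarrow> (nat \<Rightarrow> real mat) \<Rightarrow> real mat" where
  "Acal n T A = bdiag (T+1) n n A"

definition Bcal :: "nat \<Rightarrow> nat \<Rightarrow> nat \<Rightarrow> (nat \<Rightarrow> real mat) \<Rightarrow> real mat" where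
  "Bcal n m T B = bdiag (T+1) n m B"

definition Ecal :: "nat \<Rightarrow> nat \<Rightarrow> nat \<Rightarrow> (nat \<Rightarrow> real mat) \<Rightarrow> real mat" where
  "Ecal n p T E = four_block_mat (1\<^sub>m n) (0\<^sub>m n (p * T)) (0\<^sub>m (n * T) n) (bdiag T n p E)"

text \<open>Block downshift operator on R^{n(T+1)}.\<close>
definition Zcal :: "nat \<Rightarrow> nat \<Rightarrow> real mat" where
  "Zcal n T = mat (n * (T+1)) (n * (T+1)) (\<lambda>(i,j). if i = j + n then 1 else 0)"

definition Qcal :: "nat \<Rightarrow> nat \<Rightarrow> (nat \<Rightarrow> real mat) \<Rightarrow> real mat" where
  "Qcal n T Q = bdiag (T+1) n n Q"

definition Rcal :: "nat \<Rightarrow> nat \<Rightarrow> (nat \<Rightarrow> real mat) \<Rightarrow> real mat" where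
  "Rcal m T R = bdiag (T+1) m m R"

definition Ccal :: "nat \<Rightarrow> nat \<Rightarrow> nat \<Rightarrow> (nat \<Rightarrow> real mat) \<Rightarrow> (nat \<Rightarrow> real mat) \<Rightarrow> real mat" where
  "Ccal n m T Q R = four_block_mat (Qcal n T Q) (0\<^sub>m (n * (T+1)) (m * (T+1)))
                                   (0\<^sub>m (m * (T+1)) (n * (T+1))) (Rcal m T R)"

definition Ocal :: "nat \<Rightarrow> nat \<Rightarrow> nat \<Rightarrow> (nat \<Rightarrow> real mat) \<Rightarrow> (nat \<Rightarrow> real mat) \<Rightarrow> real mat \<Rightarrow> real mat \<Rightarrow> real mat" where
  "Ocal n m T Q R F G = transpose_mat G * Qcal n T Q *
     minv (1\<^sub>m (n * (T+1)) + F * minv (Rcal m T R) * transpose_mat F * Qcal n T Q) * G"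

definition achievable :: "nat \<Rightarrow> nat \<Rightarrow> nat \<Rightarrow> nat \<Rightarrow> (nat \<Rightarrow> real mat) \<Rightarrow> (nat \<Rightarrow> real mat)
   \<Rightarrow> (nat \<Rightarrow> real mat) \<Rightarrow> real mat \<Rightarrow> bool" where
  "achievable n m p T A B E Phi \<longleftrightarrow>
     Phi \<in> carrier_mat ((n + m) * (T+1)) (n + p * T) \<and>
     hcat (1\<^sub>m (n * (T+1)) - Zcal n T * Acal n T A) (- (Zcal n T * Bcal n m T B)) * Phi = Ecal n p T E"

definition Phi0 :: "nat \<Rightarrow> real mat \<Rightarrow> real mat" where
  "Phi0 n Phi = subm Phi 0 0 (dim_row Phi) n"

definition Phiw :: "nat \<Rightarrow> real mat \<Rightarrow> real mat" where
  "Phiw n Phi = subm Phi 0 n (dim_row Phi) (dim_col Phi - n)"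

definition Phix :: "nat \<Rightarrow> nat \<Rightarrow> real mat \<Rightarrow> real mat" where
  "Phix n T Phi = subm Phi 0 0 (n * (T+1)) (dim_col Phi)"

definition Phiu :: "nat \<Rightarrow> nat \<Rightarrow> real mat \<Rightarrow> real mat" where
  "Phiu n T Phi = subm Phi (n * (T+1)) 0 (dim_row Phi - n * (T+1)) (dim_col Phi)"

text \<open>The matrix P_i: pT x pT block diagonal with P as i-th diagonal block (i = 1..T).\<close>
definition Pcal :: "nat \<Rightarrow> nat \<Rightarrow> real mat \<Rightarrow> nat \<Rightarrow> real mat" where
  "Pcal p T P i = bdiag T p p (\<lambda>k. if k + 1 = i then P else 0\<^sub>m p p)"

definition in_WT :: "nat \<Rightarrow> nat \<Rightarrow> real mat \<Rightarrow> real vec \<Rightarrow> bool" where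
  "in_WT p T P w \<longleftrightarrow> w \<in> carrier_vec (p * T) \<and>
     (\<forall>k<T. quad P (vec p (\<lambda>i. w $ (k * p + i))) \<le> 1)"

definition pwb_level :: "nat \<Rightarrow> nat \<Rightarrow> real mat \<Rightarrow> real mat \<Rightarrow> real mat \<Rightarrow> real mat \<Rightarrow> real vec
   \<Rightarrow> real \<Rightarrow> real mat \<Rightarrow> bool" where
  "pwb_level p T P C Om Ww x0 mu Phi \<longleftrightarrow>
     (\<forall>w. in_WT p T P w \<longrightarrow>
        quad (transpose_mat Phi * C * Phi - Om - mu \<cdot>\<^sub>m Ww) (x0 @\<^sub>v w) \<le> 0)"

definition blk1 :: "nat \<Rightarrow> real mat \<Rightarrow> real mat" where
  "blk1 n M = subm M 0 0 n n"
definition blk2 :: "nat \<Rightarrow> real mat \<Rightarrow> real mat" where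
  "blk2 n M = subm M n 0 (dim_row M - n) n"
definition blk3' :: "nat \<Rightarrow> real mat \<Rightarrow> real mat" where
  "blk3' n M = subm M n n (dim_row M - n) (dim_col M - n)"

definition lmi_bar :: "nat \<Rightarrow> nat \<Rightarrow> nat \<Rightarrow> nat \<Rightarrow> real mat \<Rightarrow> real mat \<Rightarrow> real mat \<Rightarrow> real mat
   \<Rightarrow> real vec \<Rightarrow> real \<Rightarrow> (nat \<Rightarrow> real) \<Rightarrow> real mat \<Rightarrow> real mat" where
  "lmi_bar n m p T P Om Ww Ch x0 mu lam Phi =
     (let X0 = colm x0 in
      blk3 (transpose_mat X0 * (blk1 n Om + mu \<cdot>\<^sub>m blk1 n Ww) * X0 - scm (\<Sum>i=1..T. lam i))
           (transpose_mat X0 * (transpose_mat (blk2 n Om) + mu \<cdot>\<^sub>m transpose_mat (blk2 n Ww)))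
           (transpose_mat X0 * transpose_mat (Phi0 n Phi) * Ch)
           ((blk2 n Om + mu \<cdot>\<^sub>m blk2 n Ww) * X0)
           (msum (p * T) (\<lambda>i. lam i \<cdot>\<^sub>m Pcal p T P i) T + blk3' n Om + mu \<cdot>\<^sub>m blk3' n Ww)
           (transpose_mat (Phiw n Phi) * Ch)
           (Ch * Phi0 n Phi * X0)
           (Ch * Phiw n Phi)
           (1\<^sub>m ((n + m) * (T+1))))"

definition lmi_single :: "nat \<Rightarrow> nat \<Rightarrow> nat \<Rightarrow> nat \<Rightarrow> real mat \<Rightarrow> real mat \<Rightarrow> real mat \<Rightarrow> real mat
   \<Rightarrow> real vec \<Rightarrow> real \<Rightarrow> real \<Rightarrow> real mat \<Rightarrow> real mat" where
  "lmi_single n m p T P Om Ww Ch x0 mu la Phi =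
     (let X0 = colm x0; omega = real T / sigma_min P in
      blk3 (transpose_mat X0 * (blk1 n Om + mu \<cdot>\<^sub>m blk1 n Ww) * X0 - scm (la * omega))
           (transpose_mat X0 * (transpose_mat (blk2 n Om) + mu \<cdot>\<^sub>m transpose_mat (blk2 n Ww)))
           (transpose_mat X0 * transpose_mat (Phi0 n Phi) * Ch)
           ((blk2 n Om + mu \<cdot>\<^sub>m blk2 n Ww) * X0)
           (la \<cdot>\<^sub>m 1\<^sub>m (p * T) + blk3' n Om + mu \<cdot>\<^sub>m blk3' n Ww)
           (transpose_mat (Phiw n Phi) * Ch)
           (Ch * Phi0 n Phi * X0)
           (Ch * Phiw n Phi)
           (1\<^sub>m ((n + m) * (T+1))))"

definition feas_pwb where
  "feas_pwb n m p T A B E P C Om Ww x0 mu Phi \<longleftrightarrow>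
     achievable n m p T A B E Phi \<and> pwb_level p T P C Om Ww x0 mu Phi"

definition feas_bar where
  "feas_bar n m p T A B E P Om Ww Ch x0 mu lam Phi \<longleftrightarrow>
     (\<forall>i\<in>{1..T}. lam i \<ge> 0) \<and> achievable n m p T A B E Phi \<and>
     psd (lmi_bar n m p T P Om Ww Ch x0 mu lam Phi)"

definition feas_single where
  "feas_single n m p T A B E P Om Ww Ch x0 mu la Phi \<longleftrightarrow>
     la \<ge> 0 \<and> achievable n m p T A B E Phi \<and>
     psd (lmi_single n m p T P Om Ww Ch x0 mu la Phi)"

text \<open>Optimal values (infima, in the extended reals: +\<infinity> if infeasible).\<close>
definition opt_pwb where
  "opt_pwb n m p T A B E P C Om Ww x0 =
     Inf {ereal mu | mu. \<exists>Phi. feas_pwb n m p T A B E P C Om Ww x0 mu Phi}"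

definition opt_bar where
  "opt_bar n m p T A B E P Om Ww Ch x0 =
     Inf {ereal mu | mu. \<exists>lam Phi. feas_bar n m p T A B E P Om Ww Ch x0 mu lam Phi}"

definition opt_single where
  "opt_single n m p T A B E P Om Ww Ch x0 =
     Inf {ereal mu | mu. \<exists>la Phi. feas_single n m p T A B E P Om Ww Ch x0 mu la Phi}"

end

(*
  Both inequalities are inclusions of feasible sets. A feasible point of the multiplier SDP
  is feasible for the pointwise-bounded problem with the same level: testing its LMI at the
  vector (1, w, -C^(1/2) Phi delta) yields an S-procedure certificate that bounds the
  closed-loop cost by delta' (O + mu W_w) delta whenever w lies in W^T. A feasible point of
  the single-multiplier SDP becomes one of the multiplier SDP by spreading the multiplier as
  lambda_i = lambda / sigma_min(P), because w' P w >= sigma_min(P) |w|^2. That bound comes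
  from the minimiser of the Rayleigh quotient of P: it is an eigenvector, and the square of
  its eigenvalue is an eigenvalue of P' P.
*)
theory Submission
  imports Defs "HOL-Analysis.Function_Topology" "Jordan_Normal_Form.Spectral_Radius"
begin

abbreviation block_vec :: "nat \<Rightarrow> nat \<Rightarrow> real vec \<Rightarrow> real vec" where
  "block_vec r k w \<equiv> vec r (\<lambda>i. w $ (k * r + i))"

lemma sum_lessThan_mult_blocks:
  fixes N r :: nat and g :: "nat \<Rightarrow> 'a :: comm_monoid_add"
  shows "(\<Sum>i<N * r. g i) = (\<Sum>k<N. \<Sum>a<r. g (k * r + a))"
proof -
  have "(\<Sum>a<r. g (k * r + a)) = sum g {k * r..<k * r + r}" for k
    using sum.shift_bounds_nat_ivl[where g=g and m=0 and k="k * r" and n=r]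
    by (simp add: atLeast0LessThan add.commute)
  then show ?thesis
    by (simp add: sum.nat_group)
qed

lemma div_mod_lt_of_lt_mult:
  assumes "i < N * (r :: nat)"
  shows "i div r < N" "i mod r < r"
proof -
  show "i div r < N"
    using assms by (rule less_mult_imp_div_less)
  have "0 < r"
    using assms by (cases r) auto
  then show "i mod r < r"
    by simp
qed

lemma quad_eq_sum:
  assumes "M \<in> carrier_mat r r" "v \<in> carrier_vec r"
  shows "quad M v = (\<Sum>a<r. v $ a * (\<Sum>b<r. M $$ (a, b) * v $ b))"
  using assms by (auto simp: quad_def scalar_prod_def atLeast0LessThan intro!: sum.cong)

lemma quad_bdiag:
  assumes w: "w \<in> carrier_vec (N * r)" and f: "\<And>k. k < N \<Longrightarrow> f k \<in> carrier_mat r r"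
  shows "quad (bdiag N r r f) w = (\<Sum>k<N. quad (f k) (block_vec r k w))"
proof -
  have "quad (bdiag N r r f) w = (\<Sum>i<N * r. w $ i *
      (\<Sum>j<N * r. (if i div r = j div r then f (i div r) $$ (i mod r, j mod r) else 0) * w $ j))"
    using w by (auto simp: quad_def bdiag_def scalar_prod_def atLeast0LessThan intro!: sum.cong)
  also have "\<dots> = (\<Sum>k<N. \<Sum>a<r. w $ (k * r + a) *
      (\<Sum>l<N. \<Sum>b<r. (if k = l then f k $$ (a, b) else 0) * w $ (l * r + b)))"
    by (simp only: sum_lessThan_mult_blocks) (auto intro!: sum.cong)
  also have "\<dots> = (\<Sum>k<N. \<Sum>a<r. w $ (k * r + a) * (\<Sum>b<r. f k $$ (a, b) * w $ (k * r + b)))"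
  proof -
    have "(\<Sum>l<N. \<Sum>b<r. (if k = l then f k $$ (a, b) else 0) * w $ (l * r + b))
        = (\<Sum>b<r. f k $$ (a, b) * w $ (k * r + b))" if "k < N" for k a
      using that
      by (simp add: sum.swap[where A = "{..<N}"] if_distrib[where f = "\<lambda>x. x * y" for y] cong: if_cong)
    then show ?thesis
      by simp
  qed
  also have "\<dots> = (\<Sum>k<N. quad (f k) (block_vec r k w))"
    using f by (intro sum.cong refl) (simp add: quad_eq_sum[of _ r])
  finally show ?thesis .
qed

lemma scalar_prod_self_blocks:
  assumes "w \<in> carrier_vec (N * r)"
  shows "w \<bullet> w = (\<Sum>k<N. block_vec r k w \<bullet> block_vec r k w)"
  using assms
  by (simp add: scalar_prod_def atLeast0LessThan sum_lessThan_mult_blocks)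

lemma sym_mat_index:
  assumes "M \<in> carrier_mat k k" "transpose_mat M = M" "i < k" "j < k"
  shows "M $$ (j, i) = M $$ (i, j)"
  using assms by (metis carrier_matD index_transpose_mat(1))

lemma bdiag_carrier: "bdiag N r r f \<in> carrier_mat (N * r) (N * r)"
  by (simp add: bdiag_def)

lemma transpose_bdiag:
  assumes "\<And>k. k < N \<Longrightarrow> f k \<in> carrier_mat r r \<and> transpose_mat (f k) = f k"
  shows "transpose_mat (bdiag N r r f) = bdiag N r r f"
proof (rule eq_matI)
  fix i j assume "i < dim_row (bdiag N r r f)" "j < dim_col (bdiag N r r f)"
  then have i: "i < N * r" and j: "j < N * r"
    by (auto simp: bdiag_def)
  note ij = div_mod_lt_of_lt_mult[OF i] div_mod_lt_of_lt_mult[OF j]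
  have fij: "f (i div r) $$ (j mod r, i mod r) = f (i div r) $$ (i mod r, j mod r)"
    using assms[OF ij(1)] ij by (intro sym_mat_index) auto
  show "transpose_mat (bdiag N r r f) $$ (i, j) = bdiag N r r f $$ (i, j)"
  proof (cases "i div r = j div r")
    case True
    then show ?thesis
      using i j fij by (simp add: bdiag_def)
  next
    case False
    then show ?thesis
      using i j by (simp add: bdiag_def)
  qed
qed (simp_all add: bdiag_def)

lemma quad_add:
  assumes "A \<in> carrier_mat k k" "B \<in> carrier_mat k k" "v \<in> carrier_vec k"
  shows "quad (A + B) v = quad A v + quad B v"
  using assms by (simp add: quad_def add_mult_distrib_mat_vec scalar_prod_add_distrib[of _ k])

lemma quad_minus:
  assumes "A \<in> carrier_mat k k" "B \<in> carrier_mat k k" "v \<in> carrier_vec k"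
  shows "quad (A - B) v = quad A v - quad B v"
  using assms by (simp add: quad_def minus_mult_distrib_mat_vec scalar_prod_minus_distrib[of _ k])

lemma smult_mat_mult_vec:
  "A \<in> carrier_mat r c \<Longrightarrow> v \<in> carrier_vec c \<Longrightarrow> (a \<cdot>\<^sub>m A) *\<^sub>v v = a \<cdot>\<^sub>v (A *\<^sub>v (v :: real vec))"
  by (rule eq_vecI) (auto simp: scalar_prod_def sum_distrib_left ac_simps)

lemma transpose_smult_mat: "transpose_mat (a \<cdot>\<^sub>m A) = a \<cdot>\<^sub>m transpose_mat (A :: real mat)"
  by (rule eq_matI) auto

lemma quad_smult_mat:
  assumes "A \<in> carrier_mat k k" "v \<in> carrier_vec k"
  shows "quad (c \<cdot>\<^sub>m A) v = c * quad A v"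
  using assms by (simp add: quad_def smult_mat_mult_vec scalar_prod_smult_distrib[of _ k])

lemma quad_smult_vec:
  assumes "A \<in> carrier_mat k k" "v \<in> carrier_vec k"
  shows "quad A (c \<cdot>\<^sub>v v) = c * c * quad A v"
  using assms by (simp add: quad_def mult_mat_vec)

lemma quad_one_mat: "v \<in> carrier_vec k \<Longrightarrow> quad (1\<^sub>m k) v = v \<bullet> v"
  by (simp add: quad_def)

lemma quad_zero_mat: "v \<in> carrier_vec k \<Longrightarrow> quad (0\<^sub>m k k) v = 0"
proof -
  assume v: "v \<in> carrier_vec k"
  then have "0\<^sub>m k k *\<^sub>v v = 0\<^sub>v k"
    by (intro eq_vecI) auto
  then show ?thesis
    using v by (simp add: quad_def)
qed

lemma scalar_prod_transpose_mult_vec: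
  fixes B :: "real mat"
  assumes "B \<in> carrier_mat r c" "u \<in> carrier_vec c" "z \<in> carrier_vec r"
  shows "u \<bullet> (transpose_mat B *\<^sub>v z) = z \<bullet> (B *\<^sub>v u)"
  using assms transpose_vec_mult_scalar[OF assms] by (simp add: comm_scalar_prod[of u c])

lemma quad_transpose_mult_mult:
  fixes B :: "real mat"
  assumes B: "B \<in> carrier_mat r c" and X: "X \<in> carrier_mat r r" and v: "v \<in> carrier_vec c"
  shows "quad (transpose_mat B * X * B) v = quad X (B *\<^sub>v v)"
proof -
  have "(transpose_mat B * X * B) *\<^sub>v v = (transpose_mat B * X) *\<^sub>v (B *\<^sub>v v)"
    using assms by (intro assoc_mult_mat_vec) auto
  also have "\<dots> = transpose_mat B *\<^sub>v (X *\<^sub>v (B *\<^sub>v v))"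
    using assms by (intro assoc_mult_mat_vec) auto
  finally have "(transpose_mat B * X * B) *\<^sub>v v = transpose_mat B *\<^sub>v (X *\<^sub>v (B *\<^sub>v v))" .
  then show ?thesis
    using assms by (simp add: quad_def scalar_prod_transpose_mult_vec[OF B] comm_scalar_prod[of _ r])
qed

lemma transpose_transpose_mult_mult:
  fixes B X :: "real mat"
  assumes "B \<in> carrier_mat r c" "X \<in> carrier_mat r r"
  shows "transpose_mat (transpose_mat B * X * B) = transpose_mat B * transpose_mat X * B"
  using assms transpose_mult[of "transpose_mat B * X" c r B c] transpose_mult[of "transpose_mat B" c r X r]
  by simp

lemma quad_mult_self_sym:
  fixes C :: "real mat"
  assumes "C \<in> carrier_mat k k" "transpose_mat C = C" "v \<in> carrier_vec k"
  shows "quad (C * C) v = (C *\<^sub>v v) \<bullet> (C *\<^sub>v v)"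
  using assms scalar_prod_transpose_mult_vec[of C k k v "C *\<^sub>v v"] by (simp add: quad_def)

lemma quad_add_smult_vec:
  assumes M: "M \<in> carrier_mat k k" and sym: "transpose_mat M = M"
    and v: "v \<in> carrier_vec k" and y: "y \<in> carrier_vec k"
  shows "quad M (v + t \<cdot>\<^sub>v y) = quad M v + 2 * t * (y \<bullet> (M *\<^sub>v v)) + t * t * quad M y"
proof -
  have "M *\<^sub>v (v + t \<cdot>\<^sub>v y) = M *\<^sub>v v + t \<cdot>\<^sub>v (M *\<^sub>v y)"
    using M v y by (simp add: mult_add_distrib_mat_vec[of _ k k] mult_mat_vec[of _ k k])
  then have "quad M (v + t \<cdot>\<^sub>v y)
      = v \<bullet> (M *\<^sub>v v) + t * (v \<bullet> (M *\<^sub>v y)) + t * (y \<bullet> (M *\<^sub>v v)) + t * t * (y \<bullet> (M *\<^sub>v y))"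
    unfolding quad_def using M v y
    by (simp add: add_scalar_prod_distrib[of _ k] scalar_prod_add_distrib[of _ k] algebra_simps)
  moreover have "v \<bullet> (M *\<^sub>v y) = y \<bullet> (M *\<^sub>v v)"
    using scalar_prod_transpose_mult_vec[OF M v y] sym by simp
  ultimately show ?thesis
    unfolding quad_def by simp
qed

lemma quad_four_block_mat_sym:
  assumes A: "A \<in> carrier_mat n1 n1" and C: "C \<in> carrier_mat n2 n1" and D: "D \<in> carrier_mat n2 n2"
    and u: "u \<in> carrier_vec n1" and w: "w \<in> carrier_vec n2"
  shows "quad (four_block_mat A (transpose_mat C) C D) (u @\<^sub>v w)
    = quad A u + 2 * (w \<bullet> (C *\<^sub>v u)) + quad D w"
proof -
  have CT: "transpose_mat C \<in> carrier_mat n1 n2"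
    using C by simp
  have "quad (four_block_mat A (transpose_mat C) C D) (u @\<^sub>v w)
      = u \<bullet> (A *\<^sub>v u) + u \<bullet> (transpose_mat C *\<^sub>v w) + (w \<bullet> (C *\<^sub>v u) + w \<bullet> (D *\<^sub>v w))"
    using assms CT
    by (simp add: quad_def four_block_mat_mult_vec[OF A CT C D u w] scalar_prod_append[of _ n1 _ n2]
        scalar_prod_add_distrib[of _ n1] scalar_prod_add_distrib[of _ n2])
  then show ?thesis
    using assms by (simp add: quad_def scalar_prod_transpose_mult_vec[OF C])
qed

lemma transpose_four_block_mat_sym:
  assumes "A \<in> carrier_mat n1 n1" "C \<in> carrier_mat n2 n1" "D \<in> carrier_mat n2 n2"
    and "transpose_mat A = A" "transpose_mat D = D"
  shows "transpose_mat (four_block_mat A (transpose_mat C) C D) = four_block_mat A (transpose_mat C) C D"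
proof -
  have "transpose_mat C \<in> carrier_mat n1 n2"
    using assms by simp
  then show ?thesis
    using assms by (simp add: transpose_four_block_mat)
qed

lemma hcat_carrier: "g \<in> carrier_mat r c1 \<Longrightarrow> h \<in> carrier_mat r c2 \<Longrightarrow> hcat g h \<in> carrier_mat r (c1 + c2)"
  unfolding hcat_def by auto

lemma hcat_mult_vec:
  assumes "g \<in> carrier_mat r c1" "h \<in> carrier_mat r c2" "s \<in> carrier_vec c1" "w \<in> carrier_vec c2"
  shows "hcat g h *\<^sub>v (s @\<^sub>v w) = g *\<^sub>v s + h *\<^sub>v w"
  using assms four_block_mat_mult_vec[of g r c1 h c2 "0\<^sub>m 0 c1" 0 "0\<^sub>m 0 c2" s w]
  by (auto simp: hcat_def intro!: eq_vecI)

lemma transpose_hcat: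
  assumes "g \<in> carrier_mat r c1" "h \<in> carrier_mat r c2"
  shows "transpose_mat (hcat g h) = transpose_mat g @\<^sub>r transpose_mat h"
  using assms unfolding append_rows_def hcat_def by (subst transpose_four_block_mat) auto

lemma blk3_sym_eq_four_block_mat:
  assumes "a \<in> carrier_mat r1 r1" "d \<in> carrier_mat r2 r1" "e \<in> carrier_mat r2 r2"
    "g \<in> carrier_mat r3 r1" "h \<in> carrier_mat r3 r2"
  shows "blk3 a (transpose_mat d) (transpose_mat g) d e (transpose_mat h) g h i
    = four_block_mat (four_block_mat a (transpose_mat d) d e) (transpose_mat (hcat g h)) (hcat g h) i"
  using assms by (simp add: blk3_def transpose_hcat)

lemma blk3_sym_carrier:
  assumes "a \<in> carrier_mat r1 r1" "d \<in> carrier_mat r2 r1" "e \<in> carrier_mat r2 r2"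
    "g \<in> carrier_mat r3 r1" "h \<in> carrier_mat r3 r2" "i \<in> carrier_mat r3 r3"
  shows "blk3 a (transpose_mat d) (transpose_mat g) d e (transpose_mat h) g h i
    \<in> carrier_mat (r1 + r2 + r3) (r1 + r2 + r3)"
  using assms hcat_carrier[of g r3 r1 h r2] by (simp add: blk3_sym_eq_four_block_mat)

lemma transpose_blk3_sym:
  assumes "a \<in> carrier_mat r1 r1" "d \<in> carrier_mat r2 r1" "e \<in> carrier_mat r2 r2"
    "g \<in> carrier_mat r3 r1" "h \<in> carrier_mat r3 r2" "i \<in> carrier_mat r3 r3"
    and "transpose_mat a = a" "transpose_mat e = e" "transpose_mat i = i"
  shows "transpose_mat (blk3 a (transpose_mat d) (transpose_mat g) d e (transpose_mat h) g h i)
    = blk3 a (transpose_mat d) (transpose_mat g) d e (transpose_mat h) g h i"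
proof -
  have "four_block_mat a (transpose_mat d) d e \<in> carrier_mat (r1 + r2) (r1 + r2)"
    using assms by simp
  moreover have "transpose_mat (four_block_mat a (transpose_mat d) d e) = four_block_mat a (transpose_mat d) d e"
    using assms by (simp add: transpose_four_block_mat_sym)
  ultimately show ?thesis
    using assms transpose_four_block_mat_sym[of _ "r1 + r2" "hcat g h" r3 i] hcat_carrier[of g r3 r1 h r2]
    by (simp add: blk3_sym_eq_four_block_mat)
qed

lemma quad_blk3_sym:
  assumes a: "a \<in> carrier_mat r1 r1" and d: "d \<in> carrier_mat r2 r1" and e: "e \<in> carrier_mat r2 r2"
    and g: "g \<in> carrier_mat r3 r1" and h: "h \<in> carrier_mat r3 r2" and i: "i \<in> carrier_mat r3 r3"
    and s: "s \<in> carrier_vec r1" and w: "w \<in> carrier_vec r2" and z: "z \<in> carrier_vec r3"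
  shows "quad (blk3 a (transpose_mat d) (transpose_mat g) d e (transpose_mat h) g h i) ((s @\<^sub>v w) @\<^sub>v z)
    = quad a s + 2 * (w \<bullet> (d *\<^sub>v s)) + quad e w + 2 * (z \<bullet> (g *\<^sub>v s + h *\<^sub>v w)) + quad i z"
proof -
  have "four_block_mat a (transpose_mat d) d e \<in> carrier_mat (r1 + r2) (r1 + r2)"
    using assms by simp
  then show ?thesis
    using assms quad_four_block_mat_sym[OF _ hcat_carrier[OF g h] i _ z, of _ "s @\<^sub>v w"]
      quad_four_block_mat_sym[OF a d e s w]
    by (simp add: blk3_sym_eq_four_block_mat hcat_mult_vec[OF g h s w])
qed

lemma msum_carrier: "(\<And>i. f i \<in> carrier_mat d d) \<Longrightarrow> msum d f k \<in> carrier_mat d d"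
  by (induction k) auto

lemma transpose_msum:
  assumes "\<And>i. f i \<in> carrier_mat d d \<and> transpose_mat (f i) = f i"
  shows "transpose_mat (msum d f k) = msum d f k"
proof (induction k)
  case (Suc k)
  then show ?case
    using assms msum_carrier[of f d k] by (simp add: transpose_add[of _ d d])
qed simp

lemma quad_msum:
  assumes "\<And>i. f i \<in> carrier_mat d d" "w \<in> carrier_vec d"
  shows "quad (msum d f k) w = (\<Sum>i = 1..k. quad (f i) w)"
proof (induction k)
  case 0
  then show ?case
    using assms(2) by (simp add: quad_zero_mat)
next
  case (Suc k)
  then show ?case
    using assms msum_carrier[of f d k] by (simp add: quad_add)
qed

section \<open>Positive semidefinite matrices and inverses\<close>

lemma psdI:
  assumes "M \<in> carrier_mat k k" "transpose_mat M = M" "\<And>v. v \<in> carrier_vec k \<Longrightarrow> 0 \<le> quad M v"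
  shows "psd M"
  using assms unfolding psd_def by auto

lemma psdD:
  assumes "psd M" "M \<in> carrier_mat k k"
  shows "transpose_mat M = M" and "v \<in> carrier_vec k \<Longrightarrow> 0 \<le> quad M v"
  using assms unfolding psd_def by auto

lemma pdD:
  assumes "pd M" "M \<in> carrier_mat k k"
  shows "transpose_mat M = M" and "v \<in> carrier_vec k \<Longrightarrow> v \<noteq> 0\<^sub>v k \<Longrightarrow> 0 < quad M v"
  using assms unfolding pd_def by auto

lemma psd_carrier_of_square:
  assumes "psd C" "C * C \<in> carrier_mat k k"
  shows "C \<in> carrier_mat k k"
proof -
  have "dim_row C = k"
    using assms(2) by auto
  then show ?thesis
    using assms(1) unfolding psd_def by simp
qed

lemma pd_imp_psd:
  assumes pd: "pd M"
  shows "psd M"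
proof -
  define k where "k = dim_row M"
  have M: "M \<in> carrier_mat k k"
    using pd unfolding pd_def k_def by blast
  show ?thesis
  proof (rule psdI[OF M pdD(1)[OF pd M]])
    fix v :: "real vec"
    assume v: "v \<in> carrier_vec k"
    show "0 \<le> quad M v"
    proof (cases "v = 0\<^sub>v k")
      case True
      then show ?thesis
        using M by (simp add: quad_def)
    next
      case False
      then show ?thesis
        using pdD(2)[OF pd M v] by simp
    qed
  qed
qed

lemma pd_mult_vec_eq_0_imp:
  assumes "pd M" "M \<in> carrier_mat k k" "v \<in> carrier_vec k" "M *\<^sub>v v = 0\<^sub>v k"
  shows "v = 0\<^sub>v k"
  using assms pdD(2)[OF assms(1,2,3)] by (auto simp: quad_def)

lemma scalar_prod_self_nonneg: "0 \<le> (v :: real vec) \<bullet> v"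
  unfolding scalar_prod_def by (intro sum_nonneg) auto

lemma scalar_prod_self_eq_0:
  assumes "v \<in> carrier_vec k" "(v :: real vec) \<bullet> v = 0"
  shows "v = 0\<^sub>v k"
  using assms conjugate_square_eq_0_vec[of v k] by simp

text \<open>A positive semidefinite form vanishes only on the kernel: expand the form along
  \<open>v + t (M v)\<close> for a suitable small negative \<open>t\<close>.\<close>
lemma psd_quad_eq_0_imp_mult_vec_eq_0:
  assumes psd: "psd M" and M: "M \<in> carrier_mat k k" and v: "v \<in> carrier_vec k" and q: "quad M v = 0"
  shows "M *\<^sub>v v = 0\<^sub>v k"
proof -
  define y where "y = M *\<^sub>v v"
  define a where "a = y \<bullet> y"
  define c where "c = quad M y"
  define t where "t = - a / (c + 1)"
  have y: "y \<in> carrier_vec k"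
    using M v by (simp add: y_def)
  have c: "0 \<le> c"
    using psdD(2)[OF psd M y] by (simp add: c_def)
  have "quad M (v + t \<cdot>\<^sub>v y) = 2 * t * a + t * t * c"
    using quad_add_smult_vec[OF M psdD(1)[OF psd M] v y, of t] q by (simp add: a_def c_def y_def)
  moreover have "0 \<le> quad M (v + t \<cdot>\<^sub>v y)"
    using psdD(2)[OF psd M] v y by simp
  ultimately have "0 \<le> (c + 1) * (c + 1) * (2 * t * a + t * t * c)"
    using c by simp
  also have "\<dots> = 2 * a * (t * (c + 1)) * (c + 1) + (t * (c + 1)) * (t * (c + 1)) * c"
    by (simp add: algebra_simps)
  also have "\<dots> = 2 * a * (- a) * (c + 1) + (- a) * (- a) * c"
    using c by (simp add: t_def)
  also have "\<dots> = - (a * a * (c + 2))"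
    by (simp add: algebra_simps)
  finally have "a * a * (c + 2) \<le> 0"
    by simp
  then have "a = 0"
    using c by (auto simp: mult_le_0_iff)
  then show ?thesis
    using scalar_prod_self_eq_0[OF y] by (simp add: a_def y_def)
qed

lemma psd_bdiag:
  assumes f: "\<And>k. k < N \<Longrightarrow> f k \<in> carrier_mat r r \<and> psd (f k)"
  shows "psd (bdiag N r r f)"
proof (rule psdI[OF bdiag_carrier])
  show "transpose_mat (bdiag N r r f) = bdiag N r r f"
    using f psdD(1) by (intro transpose_bdiag) blast
  show "0 \<le> quad (bdiag N r r f) v" if v: "v \<in> carrier_vec (N * r)" for v
  proof -
    have "0 \<le> quad (f k) (block_vec r k v)" if "k < N" for k
      using f[OF that] by (intro psdD(2)) auto
    then show ?thesis
      using v f by (simp add: quad_bdiag) (intro sum_nonneg, simp)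
  qed
qed

lemma pd_bdiag:
  assumes f: "\<And>k. k < N \<Longrightarrow> f k \<in> carrier_mat r r \<and> pd (f k)"
  shows "pd (bdiag N r r f)"
proof -
  have psd: "psd (bdiag N r r f)"
    using f pd_imp_psd by (intro psd_bdiag) simp
  have "0 < quad (bdiag N r r f) v" if v: "v \<in> carrier_vec (N * r)" "v \<noteq> 0\<^sub>v (N * r)" for v
  proof -
    obtain i where i: "i < N * r" "v $ i \<noteq> 0"
      using v by (metis carrier_vecD eq_vecI index_zero_vec(1,2))
    define k where "k = i div r"
    note k = div_mod_lt_of_lt_mult[OF i(1), folded k_def]
    have nz: "block_vec r k v $ (i mod r) \<noteq> 0"
      using k i(2) by (simp add: k_def add.commute)
    have "block_vec r k v \<noteq> 0\<^sub>v r"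
    proof
      assume "block_vec r k v = 0\<^sub>v r"
      then have "block_vec r k v $ (i mod r) = 0"
        using k(2) by simp
      with nz show False
        by contradiction
    qed
    then have pos: "0 < quad (f k) (block_vec r k v)"
      using f[OF k(1)] by (intro pdD(2)) auto
    have "0 \<le> quad (f l) (block_vec r l v)" if "l < N" for l
      using f[OF that] by (intro psdD(2) pd_imp_psd) auto
    then have "0 < (\<Sum>l<N. quad (f l) (block_vec r l v))"
      using k pos by (intro sum_pos2[where I = "{..<N}" and i = k]) auto
    then show ?thesis
      using v f by (simp add: quad_bdiag)
  qed
  then show ?thesis
    using psd bdiag_carrier[of N r f] unfolding pd_def psd_def by simp
qed

lemma psd_transpose_mult_mult:
  fixes B X :: "real mat"
  assumes X: "psd X" "X \<in> carrier_mat r r" and B: "B \<in> carrier_mat r c"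
  shows "psd (transpose_mat B * X * B)"
proof (rule psdI)
  show "transpose_mat B * X * B \<in> carrier_mat c c"
    using X B by simp
  show "transpose_mat (transpose_mat B * X * B) = transpose_mat B * X * B"
    using X B transpose_transpose_mult_mult[OF B X(2)] psdD(1)[OF X] by simp
  show "0 \<le> quad (transpose_mat B * X * B) v" if "v \<in> carrier_vec c" for v
    using quad_transpose_mult_mult[OF B X(2) that] psdD(2)[OF X, of "B *\<^sub>v v"] B that by simp
qed

lemma transpose_inverse_sym:
  fixes A N :: "real mat"
  assumes A: "A \<in> carrier_mat k k" "transpose_mat A = A"
    and N: "N \<in> carrier_mat k k" "A * N = 1\<^sub>m k" "N * A = 1\<^sub>m k"
  shows "transpose_mat N = N"
proof -
  have "transpose_mat N * A = 1\<^sub>m k"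
    using A N transpose_mult[OF A(1) N(1)] by simp
  then have "transpose_mat N * A * N = N"
    using N by simp
  moreover have "transpose_mat N * A * N = transpose_mat N"
    using A N by simp
  ultimately show ?thesis
    by simp
qed

lemma minv_eqI:
  fixes A B :: "real mat"
  assumes A: "A \<in> carrier_mat k k" and B: "B \<in> carrier_mat k k"
    and AB: "A * B = 1\<^sub>m k" and BA: "B * A = 1\<^sub>m k"
  shows "minv A = B"
  unfolding minv_def
proof (rule the_equality)
  show "B \<in> carrier_mat (dim_row A) (dim_row A) \<and> A * B = 1\<^sub>m (dim_row A) \<and> B * A = 1\<^sub>m (dim_row A)"
    using assms by simp
  fix C assume C: "C \<in> carrier_mat (dim_row A) (dim_row A) \<and> A * C = 1\<^sub>m (dim_row A) \<and> C * A = 1\<^sub>m (dim_row A)"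
  moreover have "dim_row A = k"
    using A by simp
  ultimately have Cc: "C \<in> carrier_mat k k" "C * A = 1\<^sub>m k"
    by simp_all
  then have "C = C * (A * B)"
    using AB by simp
  also have "\<dots> = (C * A) * B"
    using A B Cc(1) by (simp only: assoc_mult_mat[of C k k A k B k])
  also have "\<dots> = B"
    using B by (simp only: Cc(2) left_mult_one_mat)
  finally show "C = B" .
qed

lemma minv_inverse:
  assumes A: "(A :: real mat) \<in> carrier_mat k k"
    and inj: "\<And>v. v \<in> carrier_vec k \<Longrightarrow> A *\<^sub>v v = 0\<^sub>v k \<Longrightarrow> v = 0\<^sub>v k"
  shows "minv A \<in> carrier_mat k k" "A * minv A = 1\<^sub>m k" "minv A * A = 1\<^sub>m k"
proof -
  have "det A \<noteq> 0"
    using det_0_iff_vec_prod_zero[OF A] inj by auto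
  then obtain B where B: "B \<in> carrier_mat k k" "B * A = 1\<^sub>m k" "A * B = 1\<^sub>m k"
    using det_non_zero_imp_unit[OF A] unfolding Units_def by (auto simp: ring_mat_def)
  then show "minv A \<in> carrier_mat k k" "A * minv A = 1\<^sub>m k" "minv A * A = 1\<^sub>m k"
    using minv_eqI[OF A B(1) B(3) B(2)] by simp_all
qed

lemma psd_minv:
  fixes R :: "real mat"
  assumes R: "pd R" "R \<in> carrier_mat k k"
  shows "psd (minv R)"
proof -
  note inv = minv_inverse[OF R(2) pd_mult_vec_eq_0_imp[OF R]]
  have sym: "transpose_mat (minv R) = minv R"
    using transpose_inverse_sym[OF R(2) pdD(1)[OF R] inv] .
  have "transpose_mat (minv R) * R * minv R = minv R"
    using R inv by (simp add: sym)
  then show ?thesis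
    using psd_transpose_mult_mult[OF pd_imp_psd[OF R(1)] R(2) inv(1)] by simp
qed

lemma one_plus_mult_psd_inj:
  fixes S Q :: "real mat"
  assumes S: "psd S" "S \<in> carrier_mat k k" and Q: "psd Q" "Q \<in> carrier_mat k k"
    and v: "v \<in> carrier_vec k" and K: "(1\<^sub>m k + S * Q) *\<^sub>v v = 0\<^sub>v k"
  shows "v = 0\<^sub>v k"
proof -
  have Qv: "Q *\<^sub>v v \<in> carrier_vec k"
    using Q v by simp
  have eq: "v + S *\<^sub>v (Q *\<^sub>v v) = 0\<^sub>v k"
    using K S Q v by (simp add: add_mult_distrib_mat_vec[of _ k k])
  have "quad Q v + quad S (Q *\<^sub>v v) = (Q *\<^sub>v v) \<bullet> (v + S *\<^sub>v (Q *\<^sub>v v))"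
    using S Q v by (simp add: quad_def scalar_prod_add_distrib[of _ k] comm_scalar_prod[of v k])
  also have "\<dots> = 0"
    unfolding eq using Qv by simp
  finally have "quad Q v = 0"
    using psdD(2)[OF Q v] psdD(2)[OF S Qv] by linarith
  then have "Q *\<^sub>v v = 0\<^sub>v k"
    by (rule psd_quad_eq_0_imp_mult_vec_eq_0[OF Q v])
  moreover have "S *\<^sub>v 0\<^sub>v k = 0\<^sub>v k"
    using S by (intro eq_vecI) auto
  ultimately show ?thesis
    using eq v by simp
qed

text \<open>The push-through identity \<open>Q (I + S Q)\<^sup>-\<^sup>1 = (I + Q S)\<^sup>-\<^sup>1 Q\<close> in disguise; it makes \<open>\<O>\<close>
  symmetric.\<close>
lemma transpose_mult_inverse_one_plus:
  fixes S Q N :: "real mat"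
  assumes S: "S \<in> carrier_mat k k" "transpose_mat S = S" and Q: "Q \<in> carrier_mat k k" "transpose_mat Q = Q"
    and N: "N \<in> carrier_mat k k" "(1\<^sub>m k + S * Q) * N = 1\<^sub>m k"
  shows "transpose_mat (Q * N) = Q * N"
proof -
  let ?K = "1\<^sub>m k + S * Q"
  have K: "?K \<in> carrier_mat k k"
    using S Q by simp
  have KT: "transpose_mat ?K = 1\<^sub>m k + Q * S"
    using S Q by (simp add: transpose_add[of _ k k] transpose_mult[of _ k k _ k])
  have QK: "Q * ?K = transpose_mat ?K * Q"
    using S Q mult_add_distrib_mat[of Q k k "1\<^sub>m k" k "S * Q"] add_mult_distrib_mat[of "1\<^sub>m k" k k "Q * S" Q k]
    by (simp add: KT)
  have NK: "transpose_mat N * transpose_mat ?K = 1\<^sub>m k"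
    using N K transpose_mult[OF K N(1)] by simp
  have "transpose_mat (Q * N) = transpose_mat N * Q"
    using N Q transpose_mult[OF Q(1) N(1)] by simp
  also have "\<dots> = transpose_mat N * (Q * (?K * N))"
    using N Q by simp
  also have "\<dots> = transpose_mat N * ((Q * ?K) * N)"
    using N Q K by (simp only: assoc_mult_mat[OF Q(1) K N(1)])
  also have "\<dots> = (transpose_mat N * transpose_mat ?K) * (Q * N)"
    using N Q K
    by (simp only: QK assoc_mult_mat[of "transpose_mat ?K" k k Q k N k]
        assoc_mult_mat[of "transpose_mat N" k k "transpose_mat ?K" k "Q * N" k] transpose_carrier_mat mult_carrier_mat)
  also have "\<dots> = Q * N"
    using N Q by (simp only: NK) simp
  finally show ?thesis .
qed

lemma Qcal_carrier_psd:
  assumes "\<And>k. k \<le> T \<Longrightarrow> Q k \<in> carrier_mat n n \<and> psd (Q k)"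
  shows "Qcal n T Q \<in> carrier_mat (n * (T + 1)) (n * (T + 1))" "psd (Qcal n T Q)"
  using assms bdiag_carrier[of "T + 1" n Q] psd_bdiag[of "T + 1" Q n]
  by (auto simp: Qcal_def mult.commute)

lemma Rcal_carrier_pd:
  assumes "\<And>k. k \<le> T \<Longrightarrow> R k \<in> carrier_mat m m \<and> pd (R k)"
  shows "Rcal m T R \<in> carrier_mat (m * (T + 1)) (m * (T + 1))" "pd (Rcal m T R)"
  using assms bdiag_carrier[of "T + 1" m R] pd_bdiag[of "T + 1" R m]
  by (auto simp: Rcal_def mult.commute)

lemma Ccal_carrier: "Ccal n m T Q R \<in> carrier_mat ((n + m) * (T + 1)) ((n + m) * (T + 1))"
  using bdiag_carrier[of "T + 1" n Q] bdiag_carrier[of "T + 1" m R]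
  by (auto simp: Ccal_def Qcal_def Rcal_def algebra_simps)

lemma Ocal_carrier_sym:
  assumes Q: "\<And>k. k \<le> T \<Longrightarrow> Q k \<in> carrier_mat n n \<and> psd (Q k)"
    and R: "\<And>k. k \<le> T \<Longrightarrow> R k \<in> carrier_mat m m \<and> pd (R k)"
    and F: "F \<in> carrier_mat (n * (T + 1)) (m * (T + 1))"
    and G: "G \<in> carrier_mat (n * (T + 1)) d"
  shows "Ocal n m T Q R F G \<in> carrier_mat d d" "transpose_mat (Ocal n m T Q R F G) = Ocal n m T Q R F G"
proof -
  let ?N = "n * (T + 1)" and ?Q = "Qcal n T Q" and ?R = "Rcal m T R"
  note Qc = Qcal_carrier_psd[where T = T and Q = Q and n = n, OF Q]
    and Rc = Rcal_carrier_pd[where T = T and R = R and m = m, OF R]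
  define S where "S = F * minv ?R * transpose_mat F"
  have Ri: "minv ?R \<in> carrier_mat (m * (T + 1)) (m * (T + 1))"
    using minv_inverse(1)[OF Rc(1) pd_mult_vec_eq_0_imp[OF Rc(2,1)]] .
  have FT: "transpose_mat F \<in> carrier_mat (m * (T + 1)) ?N"
    using F by simp
  have S: "psd S" "S \<in> carrier_mat ?N ?N"
    using psd_transpose_mult_mult[OF psd_minv[OF Rc(2,1)] Ri FT] Ri F
    by (simp_all add: S_def)
  define K where "K = 1\<^sub>m ?N + S * ?Q"
  have K: "K \<in> carrier_mat ?N ?N"
    using S Qc by (simp add: K_def)
  note N = minv_inverse[OF K one_plus_mult_psd_inj[OF S Qc(2,1)], folded K_def]
  have O: "Ocal n m T Q R F G = transpose_mat G * (?Q * minv K) * G"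
    using G Qc N by (simp add: Ocal_def K_def S_def)
  show "Ocal n m T Q R F G \<in> carrier_mat d d"
    unfolding O using G Qc(1) N(1) by (intro mult_carrier_mat) auto
  have "transpose_mat (?Q * minv K) = ?Q * minv K"
    using transpose_mult_inverse_one_plus[OF S(2) psdD(1)[OF S] Qc(1) psdD(1)[OF Qc(2,1)] N(1)] N(2)
    by (simp add: K_def)
  then show "transpose_mat (Ocal n m T Q R F G) = Ocal n m T Q R F G"
    using transpose_transpose_mult_mult[OF G, of "?Q * minv K"] Qc N by (simp add: O)
qed

section \<open>The smallest singular value\<close>

lemma compact_unit_sphere_coordinates:
  fixes p :: nat
  shows "compact ((\<Pi>\<^sub>E i\<in>UNIV. if i < p then {-1..1} else {0::real}) \<inter> {f. (\<Sum>i<p. f i * f i) = 1})"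
proof (rule compact_Int_closed)
  show "compact (\<Pi>\<^sub>E i\<in>UNIV. if i < p then {-1..1} else {0::real})"
    using compactin_PiE[of "\<lambda>_. euclidean" UNIV "\<lambda>i. if i < p then {-1..1} else {0::real}"]
    by (simp add: compactin_euclidean_iff euclidean_product_topology)
  show "closed {f :: nat \<Rightarrow> real. (\<Sum>i<p. f i * f i) = 1}"
    by (intro closed_Collect_eq continuous_intros continuous_on_product_coordinates)
qed

lemma quad_min_on_unit_sphere:
  fixes P :: "real mat"
  assumes P: "P \<in> carrier_mat p p" and p: "0 < p"
  obtains u where "u \<in> carrier_vec p" "u \<bullet> u = 1"
    "\<And>v. v \<in> carrier_vec p \<Longrightarrow> v \<bullet> v = 1 \<Longrightarrow> quad P u \<le> quad P v"
proof -
  define K where "K = (\<Pi>\<^sub>E i\<in>UNIV. if i < p then {-1..1} else {0::real}) \<inter> {f. (\<Sum>i<p. f i * f i) = 1}"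
  define \<phi> where "\<phi> f = (\<Sum>a<p. f a * (\<Sum>b<p. P $$ (a, b) * f b))" for f :: "nat \<Rightarrow> real"
  have "(\<lambda>i. if i = 0 then 1 else 0) \<in> K"
    using p by (auto simp: K_def if_distrib[where f = "\<lambda>x. x * _"] cong: if_cong)
  moreover have "continuous_on K \<phi>"
    unfolding \<phi>_def
    by (intro continuous_intros continuous_on_subset[OF continuous_on_product_coordinates]) auto
  ultimately obtain f where f: "f \<in> K" and fmin: "\<And>g. g \<in> K \<Longrightarrow> \<phi> f \<le> \<phi> g"
    using continuous_attains_inf[of K \<phi>] compact_unit_sphere_coordinates[of p] unfolding K_def by blast
  have quad_vec: "quad P (vec p g) = \<phi> g" for g
    unfolding \<phi>_def using P by (simp add: quad_eq_sum)
  show ?thesis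
  proof
    show "vec p f \<in> carrier_vec p"
      by simp
    show "vec p f \<bullet> vec p f = 1"
      using f by (simp add: K_def scalar_prod_def atLeast0LessThan)
    fix v :: "real vec" assume v: "v \<in> carrier_vec p" and vv: "v \<bullet> v = 1"
    define g where "g i = (if i < p then v $ i else 0)" for i
    have sq: "(\<Sum>i<p. g i * g i) = 1"
      using v vv by (simp add: g_def scalar_prod_def atLeast0LessThan)
    have "\<bar>g i\<bar> \<le> 1" if "i < p" for i
    proof -
      have "g i * g i \<le> (\<Sum>j<p. g j * g j)"
        using that by (intro member_le_sum) auto
      then show ?thesis
        using sq by (metis abs_le_square_iff abs_mult_self_eq power2_eq_square abs_one one_power2)
    qed
    then have "g \<in> K"
      using sq by (auto simp: K_def g_def abs_le_iff)
    moreover have "vec p g = v"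
      using v by (auto simp: g_def)
    ultimately show "quad P (vec p f) \<le> quad P v"
      using fmin quad_vec by metis
  qed
qed

lemma unit_sphere_min_le_quad:
  fixes P :: "real mat"
  assumes P: "P \<in> carrier_mat p p"
    and min: "\<And>v. v \<in> carrier_vec p \<Longrightarrow> v \<bullet> v = 1 \<Longrightarrow> m0 \<le> quad P v"
    and v: "v \<in> carrier_vec p"
  shows "m0 * (v \<bullet> v) \<le> quad P v"
proof (cases "v = 0\<^sub>v p")
  case True
  then show ?thesis
    using P by (simp add: quad_def)
next
  case False
  then have vv: "0 < v \<bullet> v"
    using scalar_prod_self_nonneg[of v] scalar_prod_self_eq_0[OF v] by fastforce
  define c where "c = 1 / sqrt (v \<bullet> v)"
  have cc: "c * c * (v \<bullet> v) = 1"
    using vv by (simp add: c_def)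
  have "m0 \<le> quad P (c \<cdot>\<^sub>v v)"
    using v cc by (intro min) (simp_all add: ac_simps)
  also have "\<dots> = c * c * quad P v"
    by (rule quad_smult_vec[OF P v])
  finally have "m0 * (v \<bullet> v) \<le> c * c * quad P v * (v \<bullet> v)"
    using vv by simp
  also have "\<dots> = quad P v"
    using cc by (simp add: algebra_simps)
  finally show ?thesis .
qed

text \<open>The minimiser of the Rayleigh quotient is an eigenvector, as \<open>P - m\<^sub>0 I\<close> is positive
  semidefinite and vanishes on it.\<close>
lemma unit_sphere_argmin_eigenvector:
  fixes P :: "real mat"
  assumes P: "P \<in> carrier_mat p p" "transpose_mat P = P"
    and u: "u \<in> carrier_vec p" "u \<bullet> u = 1"
    and min: "\<And>v. v \<in> carrier_vec p \<Longrightarrow> v \<bullet> v = 1 \<Longrightarrow> quad P u \<le> quad P v"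
  shows "P *\<^sub>v u = quad P u \<cdot>\<^sub>v u"
proof -
  define N where "N = P - quad P u \<cdot>\<^sub>m 1\<^sub>m p"
  have N: "N \<in> carrier_mat p p"
    unfolding N_def using P by (intro minus_carrier_mat) auto
  have quadN: "quad N v = quad P v - quad P u * (v \<bullet> v)" if "v \<in> carrier_vec p" for v
    using P that quad_minus[of P p "quad P u \<cdot>\<^sub>m 1\<^sub>m p" v] quad_smult_mat[of "1\<^sub>m p" p v "quad P u"]
    by (simp add: N_def quad_one_mat)
  have "transpose_mat N = N"
    using P transpose_minus[of P p p "quad P u \<cdot>\<^sub>m 1\<^sub>m p"] by (simp add: N_def transpose_smult_mat)
  then have "psd N"
    using N quadN unit_sphere_min_le_quad[OF P(1) min] by (intro psdI) auto
  moreover have "quad N u = 0"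
    using quadN[OF u(1)] u(2) by simp
  ultimately have "N *\<^sub>v u = 0\<^sub>v p"
    using psd_quad_eq_0_imp_mult_vec_eq_0 N u(1) by blast
  then have "P *\<^sub>v u - quad P u \<cdot>\<^sub>v u = 0\<^sub>v p"
    using P u by (simp add: N_def minus_mult_distrib_mat_vec smult_mat_mult_vec[of "1\<^sub>m p" p p])
  moreover have "P *\<^sub>v u = (P *\<^sub>v u - quad P u \<cdot>\<^sub>v u) + quad P u \<cdot>\<^sub>v u"
    using P u by (intro eq_vecI) auto
  ultimately show ?thesis
    using u by simp
qed

lemma eigenvalue_transpose_mult_pos:
  fixes P :: "real mat"
  assumes P: "P \<in> carrier_mat p p" "pd P" and ev: "eigenvalue (transpose_mat P * P) ev"
  shows "0 < ev"
proof -
  obtain v where v: "v \<in> carrier_vec p" "v \<noteq> 0\<^sub>v p" and ev: "(transpose_mat P * P) *\<^sub>v v = ev \<cdot>\<^sub>v v"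
    using ev P unfolding eigenvalue_def eigenvector_def by auto
  have Pv: "P *\<^sub>v v \<in> carrier_vec p" "P *\<^sub>v v \<noteq> 0\<^sub>v p"
    using P v pd_mult_vec_eq_0_imp[OF P(2,1) v(1)] by auto
  have "ev * (v \<bullet> v) = (P *\<^sub>v v) \<bullet> (P *\<^sub>v v)"
    using ev P v scalar_prod_transpose_mult_vec[OF P(1) v(1) Pv(1)] by simp
  moreover have "0 < (P *\<^sub>v v) \<bullet> (P *\<^sub>v v)" "0 < v \<bullet> v"
    using Pv v scalar_prod_self_nonneg scalar_prod_self_eq_0 by (metis order_le_less)+
  ultimately show ?thesis
    by (metis zero_less_mult_pos2)
qed

lemma sigma_min_pos_le_quad:
  fixes P :: "real mat"
  assumes P: "P \<in> carrier_mat p p" "pd P" and p: "0 < p"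
  shows "0 < sigma_min P" "\<And>v. v \<in> carrier_vec p \<Longrightarrow> sigma_min P * (v \<bullet> v) \<le> quad P v"
proof -
  obtain u where u: "u \<in> carrier_vec p" "u \<bullet> u = 1"
    and min: "\<And>v. v \<in> carrier_vec p \<Longrightarrow> v \<bullet> v = 1 \<Longrightarrow> quad P u \<le> quad P v"
    using quad_min_on_unit_sphere[OF P(1) p] by blast
  define m0 where "m0 = quad P u"
  define S where "S = {ev. eigenvalue (transpose_mat P * P) ev}"
  have PP: "transpose_mat P * P \<in> carrier_mat p p"
    using P by simp
  have u0: "u \<noteq> 0\<^sub>v p"
    using u by auto
  have m0: "0 < m0"
    using pdD(2)[OF P(2,1) u(1) u0] by (simp add: m0_def)
  have "P *\<^sub>v u = m0 \<cdot>\<^sub>v u"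
    using unit_sphere_argmin_eigenvector[OF P(1) pdD(1)[OF P(2,1)] u min] by (simp add: m0_def)
  then have "(transpose_mat P * P) *\<^sub>v u = (m0 * m0) \<cdot>\<^sub>v u"
    using P u pdD(1)[OF P(2,1)] by (simp add: mult_mat_vec[OF P(1)] smult_smult_assoc)
  then have m0S: "m0 * m0 \<in> S"
    using u u0 P unfolding S_def eigenvalue_def eigenvector_def by auto
  have finS: "finite S"
    using card_finite_spectrum(1)[OF PP] by (simp add: S_def spectrum_def)
  have Spos: "0 < ev" if "ev \<in> S" for ev
    using eigenvalue_transpose_mult_pos[OF P] that by (simp add: S_def)
  have "0 < Min S" "Min S \<le> m0 * m0"
    using Spos Min_in[OF finS] Min_le[OF finS m0S] m0S by auto
  then have "0 < sigma_min P" "sigma_min P \<le> m0"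
    using m0 real_sqrt_le_mono[of "Min S" "m0 * m0"]
    by (simp_all add: sigma_min_def S_def[symmetric])
  then show "0 < sigma_min P" "\<And>v. v \<in> carrier_vec p \<Longrightarrow> sigma_min P * (v \<bullet> v) \<le> quad P v"
    using unit_sphere_min_le_quad[OF P(1), of m0] min scalar_prod_self_nonneg
    by (auto simp: m0_def intro: order_trans[OF mult_right_mono])
qed

section \<open>The two linear matrix inequalities\<close>

lemma blk_carriers:
  assumes "M \<in> carrier_mat (n + d) (n + d)"
  shows "blk1 n M \<in> carrier_mat n n" "blk2 n M \<in> carrier_mat d n" "blk3' n M \<in> carrier_mat d d"
  using assms by (simp_all add: blk1_def blk2_def blk3'_def subm_def)

lemma four_block_mat_blk_split:
  assumes "M \<in> carrier_mat (n + d) (n + d)" "transpose_mat M = M"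
  shows "M = four_block_mat (blk1 n M) (transpose_mat (blk2 n M)) (blk2 n M) (blk3' n M)"
proof (rule eq_matI)
  fix i j assume "i < dim_row (four_block_mat (blk1 n M) (transpose_mat (blk2 n M)) (blk2 n M) (blk3' n M))"
    "j < dim_col (four_block_mat (blk1 n M) (transpose_mat (blk2 n M)) (blk2 n M) (blk3' n M))"
  then have ij: "i < n + d" "j < n + d"
    using assms by (simp_all add: blk1_def blk2_def blk3'_def subm_def)
  have "M $$ (i, j) = M $$ (j, i)"
    using sym_mat_index[OF assms ij] ..
  then show "M $$ (i, j) = four_block_mat (blk1 n M) (transpose_mat (blk2 n M)) (blk2 n M) (blk3' n M) $$ (i, j)"
    using assms ij by (simp add: blk1_def blk2_def blk3'_def subm_def)
qed (use assms in \<open>simp_all add: blk1_def blk2_def blk3'_def subm_def\<close>)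

lemma transpose_blk3':
  assumes "M \<in> carrier_mat (n + d) (n + d)" "transpose_mat M = M"
  shows "transpose_mat (blk3' n M) = blk3' n M"
  using assms sym_mat_index[OF assms] by (intro eq_matI) (auto simp: blk3'_def subm_def)

lemma colm_carrier: "x \<in> carrier_vec k \<Longrightarrow> colm x \<in> carrier_mat k 1"
  unfolding colm_def mat_of_cols_def by auto

lemma colm_mult_vec_one: "x \<in> carrier_vec k \<Longrightarrow> colm x *\<^sub>v vec 1 (\<lambda>_. 1) = x"
  by (intro eq_vecI) (auto simp: colm_def mat_of_cols_def scalar_prod_def)

lemma quad_scm_one: "quad (scm a) (vec 1 (\<lambda>_. 1)) = a"
  by (simp add: quad_def scm_def scalar_prod_def)

lemma Phi0_Phiw_carrier:
  assumes "Phi \<in> carrier_mat r (n + d)"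
  shows "Phi0 n Phi \<in> carrier_mat r n" "Phiw n Phi \<in> carrier_mat r d"
  using assms by (simp_all add: Phi0_def Phiw_def subm_def)

lemma Phi0_Phiw_mult_vec:
  assumes Phi: "Phi \<in> carrier_mat r (n + d)" and x: "x \<in> carrier_vec n" and w: "w \<in> carrier_vec d"
  shows "Phi *\<^sub>v (x @\<^sub>v w) = Phi0 n Phi *\<^sub>v x + Phiw n Phi *\<^sub>v w"
proof (rule eq_vecI)
  fix i assume "i < dim_vec (Phi0 n Phi *\<^sub>v x + Phiw n Phi *\<^sub>v w)"
  then have i: "i < r"
    using Phi0_Phiw_carrier[OF Phi] by simp
  have "row Phi i = row (Phi0 n Phi) i @\<^sub>v row (Phiw n Phi) i"
    using Phi i by (intro eq_vecI) (auto simp: Phi0_def Phiw_def subm_def)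
  then show "(Phi *\<^sub>v (x @\<^sub>v w)) $ i = (Phi0 n Phi *\<^sub>v x + Phiw n Phi *\<^sub>v w) $ i"
    using Phi0_Phiw_carrier[OF Phi] Phi x w i by (simp add: scalar_prod_append[of _ n _ d])
qed (use Phi Phi0_Phiw_carrier[OF Phi] in simp_all)

text \<open>The common shape of the two LMIs of the statement, for \<open>M = \<O> + \<mu> \<W>\<^sub>w\<close>: they differ only
  in the scalar \<open>a\<^sub>0\<close> subtracted in the corner (\<open>\<Sum> \<lambda>\<^sub>i\<close> resp. \<open>\<lambda> \<omega>\<close>) and the matrix \<open>e\<^sub>0\<close> added
  to the middle block (\<open>\<Sum> \<lambda>\<^sub>i \<P>\<^sub>i\<close> resp. \<open>\<lambda> I\<close>).\<close>
definition regret_lmi :: "nat \<Rightarrow> nat \<Rightarrow> real vec \<Rightarrow> real mat \<Rightarrow> real mat \<Rightarrow> real mat \<Rightarrow> real \<Rightarrow> real mat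
    \<Rightarrow> real mat" where
  "regret_lmi n r x0 Ch Phi M a0 e0 =
     blk3 (transpose_mat (colm x0) * blk1 n M * colm x0 - scm a0)
       (transpose_mat (blk2 n M * colm x0)) (transpose_mat (Ch * Phi0 n Phi * colm x0))
       (blk2 n M * colm x0) (e0 + blk3' n M) (transpose_mat (Ch * Phiw n Phi))
       (Ch * Phi0 n Phi * colm x0) (Ch * Phiw n Phi) (1\<^sub>m r)"

context
  fixes n d r :: nat and x0 :: "real vec" and Ch Phi M e0 :: "real mat"
  assumes x0: "x0 \<in> carrier_vec n" and Ch: "Ch \<in> carrier_mat r r"
    and Phi: "Phi \<in> carrier_mat r (n + d)" and M: "M \<in> carrier_mat (n + d) (n + d)"
    and e0: "e0 \<in> carrier_mat d d"
begin

lemma regret_lmi_blocks: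
  "transpose_mat (colm x0) * blk1 n M * colm x0 - scm a0 \<in> carrier_mat 1 1"
  "blk2 n M * colm x0 \<in> carrier_mat d 1" "e0 + blk3' n M \<in> carrier_mat d d"
  "Ch * Phi0 n Phi * colm x0 \<in> carrier_mat r 1" "Ch * Phiw n Phi \<in> carrier_mat r d"
  using x0 Ch e0 blk_carriers[OF M] Phi0_Phiw_carrier[OF Phi] colm_carrier[OF x0]
  by (auto simp: scm_def intro!: mult_carrier_mat)

lemma regret_lmi_carrier: "regret_lmi n r x0 Ch Phi M a0 e0 \<in> carrier_mat (1 + d + r) (1 + d + r)"
  unfolding regret_lmi_def by (rule blk3_sym_carrier[OF regret_lmi_blocks]) simp

lemma transpose_regret_lmi:
  assumes "transpose_mat M = M" "transpose_mat e0 = e0"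
  shows "transpose_mat (regret_lmi n r x0 Ch Phi M a0 e0) = regret_lmi n r x0 Ch Phi M a0 e0"
proof -
  have one_by_one: "transpose_mat A = A" if "A \<in> carrier_mat 1 1" for A :: "real mat"
    using that by (intro eq_matI) auto
  have "transpose_mat (e0 + blk3' n M) = e0 + blk3' n M"
    using assms e0 blk_carriers[OF M] transpose_blk3'[OF M] by (simp add: transpose_add)
  then show ?thesis
    unfolding regret_lmi_def
    by (intro transpose_blk3_sym[OF regret_lmi_blocks] one_by_one[OF regret_lmi_blocks(1)]) simp_all
qed

lemma quad_regret_lmi:
  assumes s: "s \<in> carrier_vec 1" and w: "w \<in> carrier_vec d" and z: "z \<in> carrier_vec r"
  shows "quad (regret_lmi n r x0 Ch Phi M a0 e0) ((s @\<^sub>v w) @\<^sub>v z)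
    = quad (transpose_mat (colm x0) * blk1 n M * colm x0 - scm a0) s
      + 2 * (w \<bullet> ((blk2 n M * colm x0) *\<^sub>v s)) + quad e0 w + quad (blk3' n M) w
      + 2 * (z \<bullet> ((Ch * Phi0 n Phi * colm x0) *\<^sub>v s + (Ch * Phiw n Phi) *\<^sub>v w)) + z \<bullet> z"
  unfolding regret_lmi_def
  using quad_blk3_sym[OF regret_lmi_blocks(1,2,3,4,5) _ s w z, of "1\<^sub>m r"] z e0 w blk_carriers[OF M]
  by (simp add: quad_add quad_one_mat)

lemma quad_regret_lmi_at_response:
  assumes Msym: "transpose_mat M = M" and w: "w \<in> carrier_vec d"
  defines "y \<equiv> Ch *\<^sub>v (Phi *\<^sub>v (x0 @\<^sub>v w))"
  shows "quad (regret_lmi n r x0 Ch Phi M a0 e0) ((vec 1 (\<lambda>_. 1) @\<^sub>v w) @\<^sub>v (- y))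
    = quad M (x0 @\<^sub>v w) - a0 + quad e0 w - y \<bullet> y"
proof -
  let ?s = "vec 1 (\<lambda>_. 1) :: real vec" and ?X = "colm x0"
  note X = colm_carrier[OF x0] and blk = blk_carriers[OF M] and Phis = Phi0_Phiw_carrier[OF Phi]
  have Xs: "?X *\<^sub>v ?s = x0"
    using colm_mult_vec_one[OF x0] .
  have s: "?s \<in> carrier_vec 1"
    by simp
  have y: "y \<in> carrier_vec r"
    using Ch Phi x0 w by (simp add: y_def)
  have "scm a0 \<in> carrier_mat 1 1"
    by (simp add: scm_def)
  then have corner: "quad (transpose_mat ?X * blk1 n M * ?X - scm a0) ?s = quad (blk1 n M) x0 - a0"
    using quad_minus[of "transpose_mat ?X * blk1 n M * ?X" 1 "scm a0" ?s]
      quad_transpose_mult_mult[OF X blk(1), of ?s] X blk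
    by (simp only: Xs quad_scm_one) simp
  have off: "(blk2 n M * ?X) *\<^sub>v ?s = blk2 n M *\<^sub>v x0"
    using X blk s by (simp add: Xs del: One_nat_def)
  have resp: "(Ch * Phi0 n Phi * ?X) *\<^sub>v ?s + (Ch * Phiw n Phi) *\<^sub>v w = y"
  proof -
    have "(Ch * Phi0 n Phi * ?X) *\<^sub>v ?s = (Ch * Phi0 n Phi) *\<^sub>v (?X *\<^sub>v ?s)"
      using Ch X Phis s by (intro assoc_mult_mat_vec) auto
    then have "(Ch * Phi0 n Phi * ?X) *\<^sub>v ?s = (Ch * Phi0 n Phi) *\<^sub>v x0"
      by (simp only: Xs)
    then show ?thesis
      using Ch Phis x0 w
      by (simp add: y_def Phi0_Phiw_mult_vec[OF Phi x0 w] mult_add_distrib_mat_vec[of _ r r])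
  qed
  have quadM: "quad M (x0 @\<^sub>v w) = quad (blk1 n M) x0 + 2 * (w \<bullet> (blk2 n M *\<^sub>v x0)) + quad (blk3' n M) w"
    using four_block_mat_blk_split[OF M Msym] quad_four_block_mat_sym[OF blk(1,2,3) x0 w] by simp
  have "quad (regret_lmi n r x0 Ch Phi M a0 e0) ((?s @\<^sub>v w) @\<^sub>v (- y))
    = quad (transpose_mat ?X * blk1 n M * ?X - scm a0) ?s
      + 2 * (w \<bullet> ((blk2 n M * ?X) *\<^sub>v ?s)) + quad e0 w + quad (blk3' n M) w
      + 2 * ((- y) \<bullet> ((Ch * Phi0 n Phi * ?X) *\<^sub>v ?s + (Ch * Phiw n Phi) *\<^sub>v w)) + (- y) \<bullet> (- y)"
    using s w y by (intro quad_regret_lmi) simp_all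
  also have "\<dots> = quad M (x0 @\<^sub>v w) - a0 + quad e0 w - y \<bullet> y"
    unfolding corner off resp quadM using y by simp
  finally show ?thesis .
qed

lemma response_bound_of_psd_regret_lmi:
  assumes psd: "psd (regret_lmi n r x0 Ch Phi M a0 e0)" and Msym: "transpose_mat M = M"
    and w: "w \<in> carrier_vec d"
  defines "y \<equiv> Ch *\<^sub>v (Phi *\<^sub>v (x0 @\<^sub>v w))"
  shows "y \<bullet> y \<le> quad M (x0 @\<^sub>v w) - a0 + quad e0 w"
proof -
  have "(vec 1 (\<lambda>_. 1) @\<^sub>v w) @\<^sub>v (- y) \<in> carrier_vec (1 + d + r)"
    using w Ch Phi x0 by (intro append_carrier_vec) (auto simp: y_def)
  then have "0 \<le> quad (regret_lmi n r x0 Ch Phi M a0 e0) ((vec 1 (\<lambda>_. 1) @\<^sub>v w) @\<^sub>v (- y))"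
    by (rule psdD(2)[OF psd regret_lmi_carrier])
  then show ?thesis
    using quad_regret_lmi_at_response[OF Msym w] by (simp add: y_def)
qed

end

lemma quad_regret_lmi_shift:
  assumes "x0 \<in> carrier_vec n" "Ch \<in> carrier_mat r r" "Phi \<in> carrier_mat r (n + d)"
    "M \<in> carrier_mat (n + d) (n + d)" "e0 \<in> carrier_mat d d" "e1 \<in> carrier_mat d d"
    and "s \<in> carrier_vec 1" "w \<in> carrier_vec d" "z \<in> carrier_vec r"
  shows "quad (regret_lmi n r x0 Ch Phi M a0 e1) ((s @\<^sub>v w) @\<^sub>v z)
    = quad (regret_lmi n r x0 Ch Phi M a0 e0) ((s @\<^sub>v w) @\<^sub>v z) + quad e1 w - quad e0 w"
  using quad_regret_lmi[OF assms(1-5,7-9)] quad_regret_lmi[OF assms(1-4,6-9)] by simp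

lemma psd_regret_lmi_mono:
  assumes x0: "x0 \<in> carrier_vec n" and Ch: "Ch \<in> carrier_mat r r" and Phi: "Phi \<in> carrier_mat r (n + d)"
    and M: "M \<in> carrier_mat (n + d) (n + d)" "transpose_mat M = M"
    and e0: "e0 \<in> carrier_mat d d" and e1: "e1 \<in> carrier_mat d d" "transpose_mat e1 = e1"
    and psd: "psd (regret_lmi n r x0 Ch Phi M a0 e0)"
    and le: "\<And>w. w \<in> carrier_vec d \<Longrightarrow> quad e0 w \<le> quad e1 w"
  shows "psd (regret_lmi n r x0 Ch Phi M a0 e1)"
proof (rule psdI[OF regret_lmi_carrier[OF x0 Ch Phi M(1) e1(1)] transpose_regret_lmi[OF x0 Ch Phi M(1) e1(1) M(2) e1(2)]])
  fix v :: "real vec" assume v: "v \<in> carrier_vec (1 + d + r)"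
  define s w z where "s = vec_first (vec_first v (1 + d)) 1" and "w = vec_last (vec_first v (1 + d)) d"
    and "z = vec_last v r"
  have v_eq: "v = (s @\<^sub>v w) @\<^sub>v z" and s: "s \<in> carrier_vec 1" and w: "w \<in> carrier_vec d"
    and z: "z \<in> carrier_vec r"
    using v by (simp_all add: s_def w_def z_def)
  have "0 \<le> quad (regret_lmi n r x0 Ch Phi M a0 e0) v"
    using psdD(2)[OF psd regret_lmi_carrier[OF x0 Ch Phi M(1) e0] v] .
  also have "\<dots> \<le> quad (regret_lmi n r x0 Ch Phi M a0 e1) v"
    unfolding v_eq quad_regret_lmi_shift[OF x0 Ch Phi M(1) e0 e1(1) s w z] using le[OF w] by simp
  finally show "0 \<le> quad (regret_lmi n r x0 Ch Phi M a0 e1) v" .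
qed

lemma Pcal_carrier: "Pcal p T P i \<in> carrier_mat (p * T) (p * T)"
  using bdiag_carrier[of T p] by (simp add: Pcal_def mult.commute)

lemma transpose_Pcal:
  assumes "P \<in> carrier_mat p p" "transpose_mat P = P"
  shows "transpose_mat (Pcal p T P i) = Pcal p T P i"
  unfolding Pcal_def using assms by (intro transpose_bdiag) auto

lemma quad_Pcal:
  assumes P: "P \<in> carrier_mat p p" and w: "w \<in> carrier_vec (p * T)" and k: "k < T"
  shows "quad (Pcal p T P (Suc k)) w = quad P (block_vec p k w)"
proof -
  have "quad (Pcal p T P (Suc k)) w = (\<Sum>l<T. quad (if l = k then P else 0\<^sub>m p p) (block_vec p l w))"
    unfolding Pcal_def using P w by (subst quad_bdiag) (auto simp: mult.commute)
  also have "\<dots> = (\<Sum>l<T. if l = k then quad P (block_vec p l w) else 0)"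
    using w by (intro sum.cong refl) (simp add: quad_zero_mat)
  finally show ?thesis
    using k by simp
qed

lemma quad_weighted_Pcal_sum:
  assumes P: "P \<in> carrier_mat p p" and w: "w \<in> carrier_vec (p * T)"
  shows "quad (msum (p * T) (\<lambda>i. lam i \<cdot>\<^sub>m Pcal p T P i) T) w = (\<Sum>k<T. lam (Suc k) * quad P (block_vec p k w))"
proof -
  have "quad (msum (p * T) (\<lambda>i. lam i \<cdot>\<^sub>m Pcal p T P i) T) w = (\<Sum>k<T. quad (lam (Suc k) \<cdot>\<^sub>m Pcal p T P (Suc k)) w)"
    using w Pcal_carrier by (simp add: quad_msum sum.atLeast1_atMost_eq)
  also have "\<dots> = (\<Sum>k<T. lam (Suc k) * quad P (block_vec p k w))"
    by (intro sum.cong refl) (simp add: quad_smult_mat[OF Pcal_carrier w] quad_Pcal[OF P w])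
  finally show ?thesis .
qed

lemma quad_weighted_Pcal_sum_le:
  assumes P: "P \<in> carrier_mat p p" and w: "w \<in> carrier_vec (p * T)"
    and lam: "\<And>i. i \<in> {1..T} \<Longrightarrow> 0 \<le> lam i"
    and bound: "\<And>k. k < T \<Longrightarrow> quad P (block_vec p k w) \<le> 1"
  shows "quad (msum (p * T) (\<lambda>i. lam i \<cdot>\<^sub>m Pcal p T P i) T) w \<le> (\<Sum>i = 1..T. lam i)"
proof -
  have "(\<Sum>k<T. lam (Suc k) * quad P (block_vec p k w)) \<le> (\<Sum>k<T. lam (Suc k))"
    using lam bound by (intro sum_mono) (simp add: mult_left_le)
  then show ?thesis
    by (simp add: quad_weighted_Pcal_sum[OF P w] sum.atLeast1_atMost_eq)
qed

lemma quad_uniform_Pcal_sum_ge: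
  assumes P: "P \<in> carrier_mat p p" "pd P" and p: "0 < p" and la: "0 \<le> la"
    and w: "w \<in> carrier_vec (p * T)"
  shows "la * (w \<bullet> w) \<le> quad (msum (p * T) (\<lambda>i. (la / sigma_min P) \<cdot>\<^sub>m Pcal p T P i) T) w"
proof -
  let ?\<sigma> = "sigma_min P"
  note \<sigma> = sigma_min_pos_le_quad[OF P p]
  have "la * (w \<bullet> w) = (\<Sum>k<T. (la / ?\<sigma>) * (?\<sigma> * (block_vec p k w \<bullet> block_vec p k w)))"
    using \<sigma>(1) scalar_prod_self_blocks[of w T p] w by (simp add: sum_distrib_left mult.commute)
  also have "\<dots> \<le> (\<Sum>k<T. (la / ?\<sigma>) * quad P (block_vec p k w))"
    using \<sigma> la by (intro sum_mono mult_left_mono) simp_all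
  also have "\<dots> = quad (msum (p * T) (\<lambda>i. (la / ?\<sigma>) \<cdot>\<^sub>m Pcal p T P i) T) w"
    using quad_weighted_Pcal_sum[OF P(1) w, of "\<lambda>_. la / ?\<sigma>"] by simp
  finally show ?thesis .
qed

lemma blk3_lmi_eq_regret_lmi:
  assumes Om: "Om \<in> carrier_mat (n + d) (n + d)" and Ww: "Ww \<in> carrier_mat (n + d) (n + d)"
    and Ch: "Ch \<in> carrier_mat r r" "transpose_mat Ch = Ch"
    and x0: "x0 \<in> carrier_vec n" and Phi: "Phi \<in> carrier_mat r (n + d)" and e0: "e0 \<in> carrier_mat d d"
  defines "X0 \<equiv> colm x0"
  shows "blk3 (transpose_mat X0 * (blk1 n Om + mu \<cdot>\<^sub>m blk1 n Ww) * X0 - scm a0)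
      (transpose_mat X0 * (transpose_mat (blk2 n Om) + mu \<cdot>\<^sub>m transpose_mat (blk2 n Ww)))
      (transpose_mat X0 * transpose_mat (Phi0 n Phi) * Ch)
      ((blk2 n Om + mu \<cdot>\<^sub>m blk2 n Ww) * X0)
      (e0 + blk3' n Om + mu \<cdot>\<^sub>m blk3' n Ww)
      (transpose_mat (Phiw n Phi) * Ch)
      (Ch * Phi0 n Phi * X0) (Ch * Phiw n Phi) (1\<^sub>m r)
    = regret_lmi n r x0 Ch Phi (Om + mu \<cdot>\<^sub>m Ww) a0 e0"
proof -
  let ?M = "Om + mu \<cdot>\<^sub>m Ww"
  have X0: "X0 \<in> carrier_mat n 1"
    unfolding X0_def by (rule colm_carrier[OF x0])
  note Phis = Phi0_Phiw_carrier[OF Phi]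
  have "blk1 n Om + mu \<cdot>\<^sub>m blk1 n Ww = blk1 n ?M"
    using Om Ww by (intro eq_matI) (auto simp: blk1_def subm_def)
  moreover have "blk2 n Om + mu \<cdot>\<^sub>m blk2 n Ww = blk2 n ?M"
    using Om Ww by (intro eq_matI) (auto simp: blk2_def subm_def)
  moreover have "transpose_mat (blk2 n Om) + mu \<cdot>\<^sub>m transpose_mat (blk2 n Ww) = transpose_mat (blk2 n ?M)"
    using Om Ww by (intro eq_matI) (auto simp: blk2_def subm_def)
  moreover have "e0 + blk3' n Om + mu \<cdot>\<^sub>m blk3' n Ww = e0 + blk3' n ?M"
    using Om Ww e0 by (intro eq_matI) (auto simp: blk3'_def subm_def)
  moreover have "transpose_mat (blk2 n ?M * X0) = transpose_mat X0 * transpose_mat (blk2 n ?M)"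
    using X0 blk_carriers[of ?M n d] Om Ww by (intro transpose_mult) auto
  moreover have "transpose_mat (Ch * Phi0 n Phi * X0) = transpose_mat X0 * transpose_mat (Phi0 n Phi) * Ch"
    using X0 Ch Phis transpose_mult[of "Ch * Phi0 n Phi" r n X0 1] transpose_mult[of Ch r r "Phi0 n Phi" n]
    by simp
  moreover have "transpose_mat (Ch * Phiw n Phi) = transpose_mat (Phiw n Phi) * Ch"
    using Ch Phis transpose_mult[of Ch r r "Phiw n Phi" d] by simp
  ultimately show ?thesis
    unfolding regret_lmi_def X0_def by simp
qed

lemma lmi_bar_eq_regret_lmi:
  assumes "Om \<in> carrier_mat (n + p * T) (n + p * T)" "Ww \<in> carrier_mat (n + p * T) (n + p * T)"
    "Ch \<in> carrier_mat ((n + m) * (T + 1)) ((n + m) * (T + 1))" "transpose_mat Ch = Ch"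
    "x0 \<in> carrier_vec n" "Phi \<in> carrier_mat ((n + m) * (T + 1)) (n + p * T)"
  shows "lmi_bar n m p T P Om Ww Ch x0 mu lam Phi
    = regret_lmi n ((n + m) * (T + 1)) x0 Ch Phi (Om + mu \<cdot>\<^sub>m Ww) (\<Sum>i = 1..T. lam i)
        (msum (p * T) (\<lambda>i. lam i \<cdot>\<^sub>m Pcal p T P i) T)"
  unfolding lmi_bar_def Let_def
  by (rule blk3_lmi_eq_regret_lmi[OF assms msum_carrier]) (simp add: Pcal_carrier)

lemma lmi_single_eq_regret_lmi:
  assumes "Om \<in> carrier_mat (n + p * T) (n + p * T)" "Ww \<in> carrier_mat (n + p * T) (n + p * T)"
    "Ch \<in> carrier_mat ((n + m) * (T + 1)) ((n + m) * (T + 1))" "transpose_mat Ch = Ch"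
    "x0 \<in> carrier_vec n" "Phi \<in> carrier_mat ((n + m) * (T + 1)) (n + p * T)"
  shows "lmi_single n m p T P Om Ww Ch x0 mu la Phi
    = regret_lmi n ((n + m) * (T + 1)) x0 Ch Phi (Om + mu \<cdot>\<^sub>m Ww) (la * (real T / sigma_min P))
        (la \<cdot>\<^sub>m 1\<^sub>m (p * T))"
  unfolding lmi_single_def Let_def
  by (rule blk3_lmi_eq_regret_lmi[OF assms]) simp

lemma quad_closed_loop_regret:
  assumes Om: "Om \<in> carrier_mat k k" and Ww: "Ww \<in> carrier_mat k k"
    and Phi: "Phi \<in> carrier_mat r k" and Ch: "Ch \<in> carrier_mat r r" "transpose_mat Ch = Ch"
    and \<delta>: "\<delta> \<in> carrier_vec k"
  shows "quad (transpose_mat Phi * (Ch * Ch) * Phi - Om - mu \<cdot>\<^sub>m Ww) \<delta>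
    = (Ch *\<^sub>v (Phi *\<^sub>v \<delta>)) \<bullet> (Ch *\<^sub>v (Phi *\<^sub>v \<delta>)) - quad (Om + mu \<cdot>\<^sub>m Ww) \<delta>"
proof -
  define X where "X = transpose_mat Phi * (Ch * Ch) * Phi"
  have X: "X \<in> carrier_mat k k"
    unfolding X_def using Phi Ch by (intro mult_carrier_mat) auto
  have "quad (X - Om - mu \<cdot>\<^sub>m Ww) \<delta> = quad (X - Om) \<delta> - quad (mu \<cdot>\<^sub>m Ww) \<delta>"
    using Ww \<delta> minus_carrier_mat[OF Om, of X] by (intro quad_minus) auto
  also have "\<dots> = quad X \<delta> - (quad Om \<delta> + mu * quad Ww \<delta>)"
    by (simp only: quad_minus[OF X Om \<delta>] quad_smult_mat[OF Ww \<delta>] diff_diff_eq)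
  also have "\<dots> = (Ch *\<^sub>v (Phi *\<^sub>v \<delta>)) \<bullet> (Ch *\<^sub>v (Phi *\<^sub>v \<delta>)) - quad (Om + mu \<cdot>\<^sub>m Ww) \<delta>"
    using quad_transpose_mult_mult[OF Phi _ \<delta>, of "Ch * Ch"] quad_mult_self_sym[OF Ch] Ch Phi \<delta>
      quad_add[OF Om _ \<delta>, of "mu \<cdot>\<^sub>m Ww"] quad_smult_mat[OF Ww \<delta>] Ww
    by (simp add: X_def)
  finally show ?thesis
    unfolding X_def .
qed

lemma pwb_level_of_feas_bar:
  assumes feas: "feas_bar n m p T A B E P Om Ww Ch x0 mu lam Phi"
    and Om: "Om \<in> carrier_mat (n + p * T) (n + p * T)" "transpose_mat Om = Om"
    and Ww: "Ww \<in> carrier_mat (n + p * T) (n + p * T)" "transpose_mat Ww = Ww"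
    and Ch: "Ch \<in> carrier_mat ((n + m) * (T + 1)) ((n + m) * (T + 1))" "transpose_mat Ch = Ch"
    and x0: "x0 \<in> carrier_vec n" and P: "P \<in> carrier_mat p p"
  shows "pwb_level p T P (Ch * Ch) Om Ww x0 mu Phi"
  unfolding pwb_level_def
proof (intro allI impI)
  fix w assume "in_WT p T P w"
  then have w: "w \<in> carrier_vec (p * T)" and bound: "\<And>k. k < T \<Longrightarrow> quad P (block_vec p k w) \<le> 1"
    unfolding in_WT_def by auto
  let ?r = "(n + m) * (T + 1)" and ?M = "Om + mu \<cdot>\<^sub>m Ww"
  let ?S = "msum (p * T) (\<lambda>i. lam i \<cdot>\<^sub>m Pcal p T P i) T"
  have lam: "\<And>i. i \<in> {1..T} \<Longrightarrow> 0 \<le> lam i" and Phi: "Phi \<in> carrier_mat ?r (n + p * T)"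
    and psd: "psd (regret_lmi n ?r x0 Ch Phi ?M (\<Sum>i = 1..T. lam i) ?S)"
    using feas lmi_bar_eq_regret_lmi[OF Om(1) Ww(1) Ch x0]
    unfolding feas_bar_def achievable_def by auto
  have M: "?M \<in> carrier_mat (n + p * T) (n + p * T)" "transpose_mat ?M = ?M"
    using Om Ww by (simp_all add: transpose_add transpose_smult_mat)
  have S: "?S \<in> carrier_mat (p * T) (p * T)"
    by (simp add: msum_carrier Pcal_carrier)
  have "(Ch *\<^sub>v (Phi *\<^sub>v (x0 @\<^sub>v w))) \<bullet> (Ch *\<^sub>v (Phi *\<^sub>v (x0 @\<^sub>v w)))
      \<le> quad ?M (x0 @\<^sub>v w) - (\<Sum>i = 1..T. lam i) + quad ?S w"
    by (rule response_bound_of_psd_regret_lmi[OF x0 Ch(1) Phi M(1) S psd M(2) w])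
  then show "quad (transpose_mat Phi * (Ch * Ch) * Phi - Om - mu \<cdot>\<^sub>m Ww) (x0 @\<^sub>v w) \<le> 0"
    using quad_closed_loop_regret[OF Om(1) Ww(1) Phi Ch, of "x0 @\<^sub>v w"] x0 w
      quad_weighted_Pcal_sum_le[where lam = lam, OF P w lam bound]
    by simp
qed

text \<open>The multipliers \<open>\<lambda>\<^sub>i = \<lambda> / \<sigma>\<^sub>m\<^sub>i\<^sub>n(P)\<close> keep the corner entry, as \<open>\<Sum> \<lambda>\<^sub>i = \<lambda> \<omega>\<close>, and only
  enlarge the middle block, as \<open>\<Sum> \<lambda>\<^sub>i \<P>\<^sub>i \<succeq> \<lambda> I\<close>.\<close>
lemma feas_bar_of_feas_single:
  assumes feas: "feas_single n m p T A B E P Om Ww Ch x0 mu la Phi"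
    and Om: "Om \<in> carrier_mat (n + p * T) (n + p * T)" "transpose_mat Om = Om"
    and Ww: "Ww \<in> carrier_mat (n + p * T) (n + p * T)" "transpose_mat Ww = Ww"
    and Ch: "Ch \<in> carrier_mat ((n + m) * (T + 1)) ((n + m) * (T + 1))" "transpose_mat Ch = Ch"
    and x0: "x0 \<in> carrier_vec n" and P: "P \<in> carrier_mat p p" "pd P" and p: "0 < p"
  shows "feas_bar n m p T A B E P Om Ww Ch x0 mu (\<lambda>_. la / sigma_min P) Phi"
proof -
  let ?r = "(n + m) * (T + 1)" and ?M = "Om + mu \<cdot>\<^sub>m Ww" and ?\<sigma> = "sigma_min P"
  let ?a = "la * (real T / ?\<sigma>)" and ?S = "msum (p * T) (\<lambda>i. (la / ?\<sigma>) \<cdot>\<^sub>m Pcal p T P i) T"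
  have la: "0 \<le> la" and ach: "achievable n m p T A B E Phi"
    and Phi: "Phi \<in> carrier_mat ?r (n + p * T)"
    and psd: "psd (regret_lmi n ?r x0 Ch Phi ?M ?a (la \<cdot>\<^sub>m 1\<^sub>m (p * T)))"
    using feas lmi_single_eq_regret_lmi[OF Om(1) Ww(1) Ch x0]
    unfolding feas_single_def achievable_def by auto
  have M: "?M \<in> carrier_mat (n + p * T) (n + p * T)" "transpose_mat ?M = ?M"
    using Om Ww by (simp_all add: transpose_add transpose_smult_mat)
  have S: "?S \<in> carrier_mat (p * T) (p * T)" "transpose_mat ?S = ?S"
    using P pdD(1)[OF P(2,1)]
    by (simp_all add: msum_carrier Pcal_carrier transpose_msum transpose_smult_mat transpose_Pcal)
  have "psd (regret_lmi n ?r x0 Ch Phi ?M ?a ?S)"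
  proof (rule psd_regret_lmi_mono[OF x0 Ch(1) Phi M _ S psd])
    show "quad (la \<cdot>\<^sub>m 1\<^sub>m (p * T)) w \<le> quad ?S w" if "w \<in> carrier_vec (p * T)" for w
      using quad_uniform_Pcal_sum_ge[OF P p la that] that
      by (simp add: quad_smult_mat[of "1\<^sub>m (p * T)" "p * T"] quad_one_mat)
  qed simp
  moreover have sum_eq: "(\<Sum>i = 1..T. la / ?\<sigma>) = ?a"
    by simp
  ultimately show ?thesis
    unfolding feas_bar_def lmi_bar_eq_regret_lmi[OF Om(1) Ww(1) Ch x0 Phi] sum_eq
    using sigma_min_pos_le_quad(1)[OF P p] la ach by simp
qed

theorem proposition1:
  fixes n m p T :: nat
    and A B E Q R :: "nat \<Rightarrow> real mat"
    and P Ww F G Ch :: "real mat"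
    and x0 :: "real vec"
  assumes pos: "n > 0" "m > 0" "p > 0" "T > 0"
    and A_dim: "\<And>k. k \<le> T \<Longrightarrow> A k \<in> carrier_mat n n"
    and B_dim: "\<And>k. k \<le> T \<Longrightarrow> B k \<in> carrier_mat n m"
    and E_dim: "\<And>k. k < T \<Longrightarrow> E k \<in> carrier_mat n p"
    and E_rank: "\<And>k. k < T \<Longrightarrow> vec_space.rank n (E k) = n"
    and Q_psd: "\<And>k. k \<le> T \<Longrightarrow> Q k \<in> carrier_mat n n \<and> psd (Q k)"
    and R_pd: "\<And>k. k \<le> T \<Longrightarrow> R k \<in> carrier_mat m m \<and> pd (R k)"
    and F_dim: "F \<in> carrier_mat (n * (T+1)) (m * (T+1))"
    and G_dim: "G \<in> carrier_mat (n * (T+1)) (n + p * T)"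
    and FG: "\<And>x u dl. is_traj n m p T A B E x u dl \<Longrightarrow> x = F *\<^sub>v u + G *\<^sub>v dl"
    and Ch: "psd Ch" "Ch * Ch = Ccal n m T Q R"
    and Ww: "Ww \<in> carrier_mat (n + p * T) (n + p * T)" "pd Ww"
    and P: "P \<in> carrier_mat p p" "pd P"
    and x0: "x0 \<in> carrier_vec n"
  shows
    "(\<forall>mu lam Phi.
        feas_bar n m p T A B E P (Ocal n m T Q R F G) Ww Ch x0 mu lam Phi \<and>
        ereal mu = opt_bar n m p T A B E P (Ocal n m T Q R F G) Ww Ch x0 \<longrightarrow>
        pwb_level p T P (Ccal n m T Q R) (Ocal n m T Q R F G) Ww x0 mu Phi)
     \<and> opt_pwb n m p T A B E P (Ccal n m T Q R) (Ocal n m T Q R F G) Ww x0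
         \<le> opt_bar n m p T A B E P (Ocal n m T Q R F G) Ww Ch x0
     \<and> opt_bar n m p T A B E P (Ocal n m T Q R F G) Ww Ch x0
         \<le> opt_single n m p T A B E P (Ocal n m T Q R F G) Ww Ch x0"
proof -
  let ?Om = "Ocal n m T Q R F G"
  have Om: "?Om \<in> carrier_mat (n + p * T) (n + p * T)" "transpose_mat ?Om = ?Om"
    using Ocal_carrier_sym[OF Q_psd R_pd F_dim G_dim] by simp_all
  have Ww_sym: "transpose_mat Ww = Ww"
    using pdD(1)[OF Ww(2,1)] .
  have Ch_carrier: "Ch \<in> carrier_mat ((n + m) * (T + 1)) ((n + m) * (T + 1))"
    using psd_carrier_of_square[OF Ch(1)] Ch(2) Ccal_carrier by simp
  note Ch_sym = psdD(1)[OF Ch(1) Ch_carrier]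
  have bar_pwb: "pwb_level p T P (Ccal n m T Q R) ?Om Ww x0 mu Phi"
    if "feas_bar n m p T A B E P ?Om Ww Ch x0 mu lam Phi" for mu lam Phi
    using pwb_level_of_feas_bar[OF that Om Ww(1) Ww_sym Ch_carrier Ch_sym x0 P(1)] Ch(2) by simp
  have single_bar: "feas_bar n m p T A B E P ?Om Ww Ch x0 mu (\<lambda>_. la / sigma_min P) Phi"
    if "feas_single n m p T A B E P ?Om Ww Ch x0 mu la Phi" for mu la Phi
    using feas_bar_of_feas_single[OF that Om Ww(1) Ww_sym Ch_carrier Ch_sym x0 P pos(3)] .
  have bar_feas_pwb: "feas_pwb n m p T A B E P (Ccal n m T Q R) ?Om Ww x0 mu Phi"
    if "feas_bar n m p T A B E P ?Om Ww Ch x0 mu lam Phi" for mu lam Phi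
    using that bar_pwb[OF that] unfolding feas_pwb_def feas_bar_def by simp
  have "opt_pwb n m p T A B E P (Ccal n m T Q R) ?Om Ww x0 \<le> opt_bar n m p T A B E P ?Om Ww Ch x0"
    unfolding opt_pwb_def opt_bar_def
    by (rule Inf_superset_mono) (auto dest: bar_feas_pwb)
  moreover have "opt_bar n m p T A B E P ?Om Ww Ch x0 \<le> opt_single n m p T A B E P ?Om Ww Ch x0"
    unfolding opt_bar_def opt_single_def
    by (rule Inf_superset_mono) (auto dest: single_bar)
  ultimately show ?thesis
    using bar_pwb by blast
qed

end
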